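(* Let $r\in(0,\infty)$, $k\ge1$ an integer, $p\in[1,\infty]$, and $u\in L_p([0,r])$. Assume that $D^ku=f_0+Df_1+\dots+D^{k-1}f_{k-1}$ in $(0,r)$ in the sense of distributions, where $f_j\in L_1([0,r])$ for $j=0,\dots,k-2$ and $f_{k-1}\in L_p([0,r])$. Then $Du\in L_p([0,r])$ and $$\|Du\|_{L_p([0,r])}\le N\|u\|_{L_1([0,r])}+N\|f_{k-1}\|_{L_p([0,r])}+N\sum_{j=0}^{k-2}\|f_j\|_{L_1([0,r])},$$ where $N=N(k,r)>0$.
   Context: $D$ denotes the derivative on the real line (in the distributional sense). *)

theory Defs
  imports "HOL-Analysis.Analysis" "HOL-Probability.Essential_Supremum"
begin

text \<open>Exponent p ranges over [1,\<infinity>], modelled as an ennreal with p \<ge> 1.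
  The measure space is Lebesgue measure on [0,r].\<close>

definition memLp :: "ennreal \<Rightarrow> real \<Rightarrow> (real \<Rightarrow> real) \<Rightarrow> bool" where
  "memLp p r f \<longleftrightarrow> f \<in> borel_measurable (lebesgue_on {0..r}) \<and>
     (if p = \<infinity> then (\<exists>C. AE x in lebesgue_on {0..r}. \<bar>f x\<bar> \<le> C)
      else integrable (lebesgue_on {0..r}) (\<lambda>x. \<bar>f x\<bar> powr enn2real p))"

definition Lp_norm :: "ennreal \<Rightarrow> real \<Rightarrow> (real \<Rightarrow> real) \<Rightarrow> real" where
  "Lp_norm p r f =
     (if p = \<infinity> then real_of_ereal (esssup (lebesgue_on {0..r}) (\<lambda>x. ereal \<bar>f x\<bar>))
      else (LINT x|lebesgue_on {0..r}. \<bar>f x\<bar> powr enn2real p) powr (1 / enn2real p))"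

text \<open>Test functions C_c^\<infinity>((0,r)): smooth on the real line, with support in a
  compact subinterval [a,b] of (0,r).\<close>

definition test_fun :: "real \<Rightarrow> (real \<Rightarrow> real) \<Rightarrow> bool" where
  "test_fun r \<phi> \<longleftrightarrow> (\<forall>n x. ((deriv ^^ n) \<phi>) differentiable (at x)) \<and>
     (\<exists>a b. 0 < a \<and> b < r \<and> (\<forall>x. x \<notin> {a..b} \<longrightarrow> \<phi> x = 0))"

end

theory Submission
  imports Defs
begin

text \<open>Testing against derivatives of test functions, the lower-order terms \<open>D^j f_j\<close>,
  \<open>j < k - 1\<close>, are integrated into \<open>D^(k-1) G\<close>, where \<open>G\<close> is built from primitives of
  \<open>L_1\<close> functions and is therefore bounded by their \<open>L_1\<close> norms; thus
  \<open>D^k u = D^(k-1) (f_(k-1) + G)\<close>. The order is then lowered one step at a time: if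
  \<open>D^(n+1) u = D^n w\<close>, then \<open>D^n u - D^(n-1) w\<close> has vanishing derivative, so it is a
  constant, which is \<open>D^(n-1)\<close> of a multiple of \<open>x^(n-1)\<close>. To see this, a test function \<open>\<psi>\<close>
  is replaced by \<open>\<psi> - (\<integral>\<psi>) \<theta>\<close>, the derivative of a test function, for a fixed bump \<open>\<theta>\<close>
  with \<open>\<integral>\<theta> = 1\<close>; testing with \<open>\<theta>\<close> itself bounds the constant by \<open>\<parallel>u\<parallel>_1 + \<parallel>w\<parallel>_1\<close>.
  After \<open>k - 1\<close> steps \<open>Du = f_(k-1) + B\<close> with \<open>sup |B| \<le> C (\<parallel>u\<parallel>_1 + \<Sum>_j \<parallel>f_j\<parallel>_1)\<close>, and the
  \<open>L_p\<close> bound follows from \<open>\<parallel>f_(k-1)\<parallel>_1 \<le> (1 + r) \<parallel>f_(k-1)\<parallel>_p\<close>.\<close>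

section \<open>Smooth functions\<close>

coinductive smooth :: "(real \<Rightarrow> real) \<Rightarrow> bool" where
  smoothI: "(\<And>x. f differentiable (at x)) \<Longrightarrow> smooth (deriv f) \<Longrightarrow> smooth f"

lemma smooth_differentiable: "smooth f \<Longrightarrow> f differentiable (at x)"
  by (erule smooth.cases) auto

lemma smooth_deriv: "smooth f \<Longrightarrow> smooth (deriv f)"
  by (erule smooth.cases) auto

lemma smooth_has_real_derivative: "smooth f \<Longrightarrow> (f has_real_derivative deriv f x) (at x)"
  using DERIV_deriv_iff_real_differentiable smooth_differentiable by blast

lemma smooth_continuous_on: "smooth f \<Longrightarrow> continuous_on S f"
  by (meson continuous_at_imp_continuous_on differentiable_imp_continuous_within smooth_differentiable)

lemma funpow_deriv_Suc_right: "(deriv ^^ Suc n) f = (deriv ^^ n) (deriv f)"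
  by (simp add: funpow_Suc_right del: funpow.simps)

lemma smooth_funpow_deriv: "smooth f \<Longrightarrow> smooth ((deriv ^^ n) f)"
  by (induction n) (auto intro: smooth_deriv)

lemma smooth_iff_funpow_deriv_differentiable:
  "smooth f \<longleftrightarrow> (\<forall>n x. (deriv ^^ n) f differentiable (at x))"
proof
  assume "smooth f"
  then show "\<forall>n x. (deriv ^^ n) f differentiable (at x)"
    by (auto intro: smooth_differentiable smooth_funpow_deriv)
next
  assume diff: "\<forall>n x. (deriv ^^ n) f differentiable (at x)"
  have "\<exists>n. g = (deriv ^^ n) f \<Longrightarrow> smooth g" for g
  proof (coinduction arbitrary: g rule: smooth.coinduct)
    case (smooth g)
    then obtain n where "g = (deriv ^^ n) f" by auto
    then show ?case using diff by (auto intro!: exI[of _ "Suc n"])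
  qed
  then show "smooth f" by (metis funpow_0)
qed

lemma deriv_eqI: "(\<And>x. (f has_real_derivative g x) (at x)) \<Longrightarrow> deriv f = g"
  by (rule ext) (rule DERIV_imp_deriv)

text \<open>If every generator is differentiable with derivative in the generated algebra, the
  whole algebra consists of smooth functions; this proves smoothness of the bump function
  without computing its higher derivatives.\<close>

inductive fun_algebra :: "((real \<Rightarrow> real) \<Rightarrow> bool) \<Rightarrow> (real \<Rightarrow> real) \<Rightarrow> bool" for G where
  generator: "G g \<Longrightarrow> fun_algebra G g"
| const: "fun_algebra G (\<lambda>x. c)"
| add: "fun_algebra G f \<Longrightarrow> fun_algebra G g \<Longrightarrow> fun_algebra G (\<lambda>x. f x + g x)"
| mult: "fun_algebra G f \<Longrightarrow> fun_algebra G g \<Longrightarrow> fun_algebra G (\<lambda>x. f x * g x)"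

lemma fun_algebra_deriv:
  assumes G: "\<And>g. G g \<Longrightarrow> (\<forall>x. g differentiable (at x)) \<and> fun_algebra G (deriv g)"
  shows "fun_algebra G f \<Longrightarrow> (\<forall>x. f differentiable (at x)) \<and> fun_algebra G (deriv f)"
proof (induction rule: fun_algebra.induct)
  case (generator g)
  then show ?case using G by auto
next
  case (const c)
  have "deriv (\<lambda>x. c) = (\<lambda>x. 0)" by (rule deriv_eqI) auto
  then show ?case by (auto intro: fun_algebra.const)
next
  case (add f g)
  have "deriv (\<lambda>x. f x + g x) = (\<lambda>x. deriv f x + deriv g x)"
    by (rule deriv_eqI) (use add in \<open>blast intro: DERIV_add DERIV_deriv_iff_real_differentiable[THEN iffD2]\<close>)
  then show ?case using add by (auto intro: fun_algebra.add)
next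
  case (mult f g)
  have "deriv (\<lambda>x. f x * g x) = (\<lambda>x. deriv f x * g x + deriv g x * f x)"
    by (rule deriv_eqI) (use mult in \<open>blast intro: DERIV_mult DERIV_deriv_iff_real_differentiable[THEN iffD2]\<close>)
  then show ?case using mult by (auto intro: fun_algebra.intros)
qed

lemma smooth_fun_algebra:
  assumes "\<And>g. G g \<Longrightarrow> (\<forall>x. g differentiable (at x)) \<and> fun_algebra G (deriv g)"
  shows "fun_algebra G f \<Longrightarrow> smooth f"
proof (coinduction arbitrary: f rule: smooth.coinduct)
  case (smooth f)
  then show ?case using fun_algebra_deriv[OF assms smooth] by blast
qed

lemma fun_algebra_smooth_imp_smooth: "fun_algebra smooth f \<Longrightarrow> smooth f"
  by (rule smooth_fun_algebra) (auto intro: smooth_differentiable smooth_deriv fun_algebra.generator)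

lemma smooth_add: "smooth f \<Longrightarrow> smooth g \<Longrightarrow> smooth (\<lambda>x. f x + g x)"
  by (rule fun_algebra_smooth_imp_smooth, rule fun_algebra.add; rule fun_algebra.generator)

lemma smooth_mult: "smooth f \<Longrightarrow> smooth g \<Longrightarrow> smooth (\<lambda>x. f x * g x)"
  by (rule fun_algebra_smooth_imp_smooth, rule fun_algebra.mult; rule fun_algebra.generator)

lemma smooth_const: "smooth (\<lambda>x. c)"
  by (rule fun_algebra_smooth_imp_smooth, rule fun_algebra.const)

lemma smooth_add_scaled: "smooth f \<Longrightarrow> smooth g \<Longrightarrow> smooth (\<lambda>x. f x + c * g x)"
  by (intro smooth_add smooth_mult smooth_const)

lemma deriv_add_scaled:
  assumes "smooth f" "smooth g"
  shows "deriv (\<lambda>x. f x + c * g x) = (\<lambda>x. deriv f x + c * deriv g x)"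
  by (rule deriv_eqI) (intro DERIV_add DERIV_cmult smooth_has_real_derivative assms)

lemma funpow_deriv_add_scaled:
  "smooth f \<Longrightarrow> smooth g \<Longrightarrow>
    (deriv ^^ n) (\<lambda>x. f x + c * g x) = (\<lambda>x. (deriv ^^ n) f x + c * (deriv ^^ n) g x)"
proof (induction n arbitrary: f g)
  case (Suc n)
  show ?case unfolding funpow_deriv_Suc_right deriv_add_scaled[OF Suc.prems]
    by (rule Suc.IH) (use Suc.prems in \<open>auto intro: smooth_deriv\<close>)
qed simp

section \<open>A smooth bump function\<close>

definition flat_exp :: "nat \<Rightarrow> real \<Rightarrow> real" where
  "flat_exp n t = (if t \<le> 0 then 0 else exp (- 1/t) / t^n)"

lemma flat_exp_tendsto_0: "((\<lambda>t. exp (- 1/t) / t^n) \<longlongrightarrow> 0) (at_right (0::real))"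
proof -
  have "((\<lambda>t. (inverse t) ^ n / exp (inverse t)) \<longlongrightarrow> 0) (at_right (0::real))"
    by (rule filterlim_compose[OF tendsto_power_div_exp_0 filterlim_inverse_at_top_right])
  moreover have "eventually (\<lambda>t. (inverse t) ^ n / exp (inverse t) = exp (- 1/t) / t^n) (at_right (0::real))"
    using eventually_at_right_less[of "0::real"]
    by eventually_elim (simp add: exp_minus field_simps)
  ultimately show ?thesis by (rule tendsto_cong[THEN iffD1, rotated])
qed

lemma flat_exp_has_real_derivative:
  "(flat_exp n has_real_derivative (flat_exp (n+2) t - n * flat_exp (n+1) t)) (at t)"
proof (cases "t > 0")
  case True
  have "((\<lambda>t. exp (- 1/t) / t^n) has_real_derivative
          (exp (- 1/t) / t^(n+2) - n * (exp (- 1/t) / t^(n+1)))) (at t)"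
    using True
    by (auto intro!: derivative_eq_intros simp: field_simps power_add power_Suc2 simp del: power_Suc)
       (cases n, auto)
  moreover have "flat_exp (n+2) t - n * flat_exp (n+1) t = exp (- 1/t) / t^(n+2) - n * (exp (- 1/t) / t^(n+1))"
    using True by (simp add: flat_exp_def)
  ultimately have "((\<lambda>t. exp (- 1/t) / t^n) has_real_derivative
                     (flat_exp (n+2) t - n * flat_exp (n+1) t)) (at t)"
    by simp
  then show ?thesis
    by (rule has_field_derivative_transform_within_open[where S="{0<..}"])
       (use True in \<open>auto simp: flat_exp_def\<close>)
next
  case False
  show ?thesis
  proof (cases "t < 0")
    case True
    have "(flat_exp n has_real_derivative 0) (at t)"
      by (rule has_field_derivative_transform_within_open[OF DERIV_const, where S="{..<0}"])
         (use True in \<open>auto simp: flat_exp_def\<close>)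
    then show ?thesis using True by (simp add: flat_exp_def)
  next
    case False
    with \<open>\<not> t > 0\<close> have t: "t = 0" by simp
    have "((\<lambda>y. (flat_exp n y - flat_exp n 0) / (y - 0)) \<longlongrightarrow> 0) (at (0::real))"
    proof (rule filterlim_split_at)
      have "eventually (\<lambda>y. y < 0) (at_left (0::real))" by (simp add: eventually_at_filter)
      then have "eventually (\<lambda>y. (flat_exp n y - flat_exp n 0) / (y - 0) = 0) (at_left (0::real))"
        by eventually_elim (simp add: flat_exp_def)
      then show "((\<lambda>y. (flat_exp n y - flat_exp n 0) / (y - 0)) \<longlongrightarrow> 0) (at_left (0::real))"
        by (rule tendsto_eventually)
      have "eventually (\<lambda>y. exp (- 1/y) / y^(Suc n) = (flat_exp n y - flat_exp n 0) / (y - 0))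
              (at_right (0::real))"
        using eventually_at_right_less[of "0::real"] by eventually_elim (simp add: flat_exp_def)
      then show "((\<lambda>y. (flat_exp n y - flat_exp n 0) / (y - 0)) \<longlongrightarrow> 0) (at_right (0::real))"
        by (rule tendsto_cong[THEN iffD1, OF _ flat_exp_tendsto_0[of "Suc n"]])
    qed
    then have "(flat_exp n has_real_derivative 0) (at 0)"
      by (simp add: has_field_derivative_iff)
    then show ?thesis using t by (simp add: flat_exp_def)
  qed
qed

definition affine_flat_exp :: "(real \<Rightarrow> real) \<Rightarrow> bool" where
  "affine_flat_exp g \<longleftrightarrow> (\<exists>n s c. g = (\<lambda>x. flat_exp n (s*x+c)))"

lemma affine_flat_exp_deriv:
  assumes "affine_flat_exp g"
  shows "(\<forall>x. g differentiable (at x)) \<and> fun_algebra affine_flat_exp (deriv g)"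
proof -
  obtain n s c where g: "g = (\<lambda>x. flat_exp n (s*x+c))"
    using assms by (auto simp: affine_flat_exp_def)
  define g' where "g' = (\<lambda>x. s * flat_exp (n+2) (s*x+c) + (- (s * n)) * flat_exp (n+1) (s*x+c))"
  have D: "(g has_real_derivative g' x) (at x)" for x
  proof -
    have "((\<lambda>x. flat_exp n (s*x+c)) has_real_derivative
            (flat_exp (n+2) (s*x+c) - n * flat_exp (n+1) (s*x+c)) * s) (at x)"
      by (rule DERIV_chain2[OF flat_exp_has_real_derivative]) (auto intro!: derivative_eq_intros)
    then show ?thesis unfolding g g'_def by (simp add: algebra_simps)
  qed
  have "fun_algebra affine_flat_exp g'"
    unfolding g'_def
    by (rule fun_algebra.add; rule fun_algebra.mult; (rule fun_algebra.const | rule fun_algebra.generator)?)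
       (auto simp: affine_flat_exp_def)
  moreover have "\<forall>x. g differentiable (at x)"
    using D real_differentiable_def by blast
  ultimately show ?thesis by (simp add: deriv_eqI[OF D])
qed

definition bump :: "real \<Rightarrow> real \<Rightarrow> real \<Rightarrow> real" where
  "bump a b x = flat_exp 0 (x - a) * flat_exp 0 (b - x)"

lemma smooth_bump: "smooth (bump a b)"
proof -
  have factors: "affine_flat_exp (\<lambda>x. flat_exp 0 (x - a))" "affine_flat_exp (\<lambda>x. flat_exp 0 (b - x))"
    unfolding affine_flat_exp_def
    by (rule exI[of _ 0], rule exI[of _ 1], rule exI[of _ "-a"], simp,
        rule exI[of _ 0], rule exI[of _ "-1"], rule exI[of _ b], simp)
  show ?thesis
    unfolding bump_def
    by (rule smooth_fun_algebra[where G=affine_flat_exp])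
       (erule affine_flat_exp_deriv, intro fun_algebra.mult fun_algebra.generator factors)
qed

lemma bump_eq_0: "x \<notin> {a<..<b} \<Longrightarrow> bump a b x = 0"
  by (auto simp: bump_def flat_exp_def)

lemma bump_pos: "x \<in> {a<..<b} \<Longrightarrow> bump a b x > 0"
  by (auto simp: bump_def flat_exp_def)

lemma bump_nonneg: "bump a b x \<ge> 0"
  by (auto simp: bump_def flat_exp_def)

section \<open>Test functions\<close>

lemma test_fun_iff_smooth:
  "test_fun r \<phi> \<longleftrightarrow> smooth \<phi> \<and> (\<exists>a b. 0 < a \<and> b < r \<and> (\<forall>x. x \<notin> {a..b} \<longrightarrow> \<phi> x = 0))"
  unfolding test_fun_def smooth_iff_funpow_deriv_differentiable by blast

lemma test_fun_smooth: "test_fun r \<phi> \<Longrightarrow> smooth \<phi>"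
  unfolding test_fun_iff_smooth by blast

lemma continuous_on_test_fun: "test_fun r \<phi> \<Longrightarrow> continuous_on S \<phi>"
  using smooth_continuous_on test_fun_smooth by blast

lemma test_fun_vanish_endpoints: "test_fun r \<phi> \<Longrightarrow> \<phi> 0 = 0 \<and> \<phi> r = 0"
  unfolding test_fun_iff_smooth by force

lemma deriv_eq_0_outside:
  fixes \<phi> :: "real \<Rightarrow> real"
  assumes zero: "\<forall>x. x \<notin> {a..b} \<longrightarrow> \<phi> x = 0" and x: "x \<notin> {a..b}"
  shows "deriv \<phi> x = 0"
proof -
  obtain S where "open S" "x \<in> S" "\<forall>y\<in>S. \<phi> y = 0"
  proof (cases "x < a")
    case True
    then show ?thesis using zero by (intro that[of "{..<a}"]) auto
  next
    case False
    then show ?thesis using zero x by (intro that[of "{b<..}"]) auto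
  qed
  then have "(\<phi> has_real_derivative 0) (at x)"
    by (intro has_field_derivative_transform_within_open[OF DERIV_const, where S=S]) auto
  then show ?thesis by (rule DERIV_imp_deriv)
qed

lemma test_fun_deriv: "test_fun r \<phi> \<Longrightarrow> test_fun r (deriv \<phi>)"
  unfolding test_fun_iff_smooth using deriv_eq_0_outside smooth_deriv by blast

lemma test_fun_funpow_deriv: "test_fun r \<phi> \<Longrightarrow> test_fun r ((deriv ^^ n) \<phi>)"
  by (induction n) (auto intro: test_fun_deriv)

lemma test_fun_add_scaled:
  assumes "test_fun r \<phi>" "test_fun r \<psi>"
  shows "test_fun r (\<lambda>x. \<phi> x + c * \<psi> x)"
proof -
  obtain a b where ab: "0 < a" "b < r" and \<phi>0: "\<forall>x. x \<notin> {a..b} \<longrightarrow> \<phi> x = 0"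
    and "smooth \<phi>"
    using assms(1) unfolding test_fun_iff_smooth by blast
  obtain a' b' where ab': "0 < a'" "b' < r" and \<psi>0: "\<forall>x. x \<notin> {a'..b'} \<longrightarrow> \<psi> x = 0"
    and "smooth \<psi>"
    using assms(2) unfolding test_fun_iff_smooth by blast
  have "\<phi> x + c * \<psi> x = 0" if "x \<notin> {min a a'..max b b'}" for x
  proof -
    have "x \<notin> {a..b}" "x \<notin> {a'..b'}" using that by auto
    then show ?thesis using \<phi>0 \<psi>0 by simp
  qed
  moreover have "0 < min a a'" "max b b' < r" using ab ab' by auto
  ultimately show ?thesis
    unfolding test_fun_iff_smooth using smooth_add_scaled \<open>smooth \<phi>\<close> \<open>smooth \<psi>\<close> by blast
qed

section \<open>Integrals over \<open>[0, r]\<close>\<close>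

lemma continuous_on_Icc_measurable:
  fixes f :: "real \<Rightarrow> real"
  shows "continuous_on {a..b} f \<Longrightarrow> f \<in> borel_measurable (lebesgue_on {a..b})"
  by (rule continuous_imp_measurable_on_sets_lebesgue) auto

lemma lebesgue_integral_Icc_continuous:
  fixes f :: "real \<Rightarrow> real"
  shows "continuous_on {a..b} f \<Longrightarrow> (LINT x|lebesgue_on {a..b}. f x) = integral {a..b} f"
  by (rule lebesgue_integral_eq_integral) (auto intro: continuous_imp_integrable_real)

lemma measure_lebesgue_on_Icc [simp]: "0 \<le> r \<Longrightarrow> measure (lebesgue_on {0..r}) {0..(r::real)} = r"
  by (simp add: measure_restrict_space)

lemma LINT_const_Icc: "0 \<le> r \<Longrightarrow> (LINT x|lebesgue_on {0..r}. (c::real)) = c * r"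
  by simp

lemma LINT_abs_nonneg: "0 \<le> (LINT x|M. \<bar>f x :: real\<bar>)"
  by (rule integral_nonneg_AE) auto

lemma integrable_mult_bounded:
  fixes f g :: "'a \<Rightarrow> real"
  assumes "integrable M f" "g \<in> borel_measurable M" "\<forall>x\<in>space M. \<bar>g x\<bar> \<le> B"
  shows "integrable M (\<lambda>x. f x * g x)"
proof (rule Bochner_Integration.integrable_bound[where f="\<lambda>x. B * f x"])
  show "(\<lambda>x. f x * g x) \<in> borel_measurable M"
    using assms borel_measurable_integrable by measurable
  show "AE x in M. norm (f x * g x) \<le> norm (B * f x)"
  proof (rule AE_I2)
    fix x assume "x \<in> space M"
    then have "\<bar>f x\<bar> * \<bar>g x\<bar> \<le> \<bar>f x\<bar> * \<bar>B\<bar>"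
      using assms(3) by (intro mult_left_mono) force+
    then show "norm (f x * g x) \<le> norm (B * f x)" by (simp add: abs_mult mult.commute)
  qed
qed (use assms(1) in simp)

lemma abs_LINT_mult_le:
  fixes g h :: "'a \<Rightarrow> real"
  assumes g: "integrable M g" and h: "h \<in> borel_measurable M" and hb: "\<forall>x\<in>space M. \<bar>h x\<bar> \<le> B"
  shows "\<bar>LINT x|M. g x * h x\<bar> \<le> B * (LINT x|M. \<bar>g x\<bar>)"
proof -
  have "\<bar>LINT x|M. g x * h x\<bar> \<le> (LINT x|M. \<bar>g x * h x\<bar>)"
    by (rule integral_abs_bound)
  also have "\<dots> \<le> (LINT x|M. B * \<bar>g x\<bar>)"
  proof (rule integral_mono)
    fix x assume "x \<in> space M"
    then have "\<bar>g x\<bar> * \<bar>h x\<bar> \<le> \<bar>g x\<bar> * B" using hb by (intro mult_left_mono) auto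
    then show "\<bar>g x * h x\<bar> \<le> B * \<bar>g x\<bar>" by (simp add: abs_mult mult.commute)
  qed (use integrable_mult_bounded[OF g h hb] g in auto)
  finally show ?thesis by simp
qed

lemma integrable_bounded_Icc:
  fixes g :: "real \<Rightarrow> real"
  assumes "g \<in> borel_measurable (lebesgue_on {0..r})" "\<forall>x\<in>{0..r}. \<bar>g x\<bar> \<le> B"
  shows "integrable (lebesgue_on {0..r}) g"
proof -
  interpret finite_measure "lebesgue_on {0..r}" by (rule finite_measure_lebesgue_on) simp
  show ?thesis by (rule integrable_const_bound[where B=B]) (use assms in auto)
qed

lemma LINT_abs_add_bounded:
  fixes f B :: "real \<Rightarrow> real"
  assumes r: "0 \<le> r" and f: "integrable (lebesgue_on {0..r}) f"
    and Bm: "B \<in> borel_measurable (lebesgue_on {0..r})" and Bb: "\<forall>x\<in>{0..r}. \<bar>B x\<bar> \<le> b"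
  shows "integrable (lebesgue_on {0..r}) (\<lambda>x. f x + B x)"
    and "(LINT x|lebesgue_on {0..r}. \<bar>f x + B x\<bar>) \<le> (LINT x|lebesgue_on {0..r}. \<bar>f x\<bar>) + r * b"
proof -
  have Bi: "integrable (lebesgue_on {0..r}) B" by (rule integrable_bounded_Icc[OF Bm Bb])
  then show "integrable (lebesgue_on {0..r}) (\<lambda>x. f x + B x)" using f by simp
  have "(LINT x|lebesgue_on {0..r}. \<bar>f x + B x\<bar>) \<le> (LINT x|lebesgue_on {0..r}. \<bar>f x\<bar> + b)"
    using f Bi Bb by (intro integral_mono) (auto intro: abs_triangle_ineq[THEN order_trans])
  also have "\<dots> = (LINT x|lebesgue_on {0..r}. \<bar>f x\<bar>) + (LINT x|lebesgue_on {0..r}. b)"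
    using f by (intro Bochner_Integration.integral_add) auto
  also have "\<dots> = (LINT x|lebesgue_on {0..r}. \<bar>f x\<bar>) + r * b"
    by (simp only: LINT_const_Icc[OF r] mult.commute)
  finally show "(LINT x|lebesgue_on {0..r}. \<bar>f x + B x\<bar>) \<le> (LINT x|lebesgue_on {0..r}. \<bar>f x\<bar>) + r * b" .
qed

lemma bounded_funpow_deriv_test_fun:
  assumes "test_fun r \<phi>"
  obtains B where "0 \<le> B" "\<forall>x\<in>{0..r}. \<bar>(deriv ^^ n) \<phi> x\<bar> \<le> B"
  using continuous_on_compact_bound[OF compact_Icc
      continuous_on_test_fun[OF test_fun_funpow_deriv[OF assms]]]
  by (metis real_norm_def)

lemma integrable_mult_funpow_deriv_test_fun:
  fixes f :: "real \<Rightarrow> real"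
  assumes "integrable (lebesgue_on {0..r}) f" "test_fun r \<phi>"
  shows "integrable (lebesgue_on {0..r}) (\<lambda>x. f x * (deriv ^^ n) \<phi> x)"
proof -
  obtain B where "\<forall>x\<in>{0..r}. \<bar>(deriv ^^ n) \<phi> x\<bar> \<le> B"
    using bounded_funpow_deriv_test_fun[OF assms(2)] by blast
  then show ?thesis
    by (intro integrable_mult_bounded[OF assms(1)] continuous_on_Icc_measurable
        continuous_on_test_fun[OF test_fun_funpow_deriv[OF assms(2)]]) auto
qed

lemma test_fun_integral_by_parts:
  assumes r: "0 < r" and \<phi>: "test_fun r \<phi>"
    and w: "\<And>x. (w has_real_derivative w' x) (at x)" and w': "continuous_on UNIV w'"
  shows "(LINT x|lebesgue_on {0..r}. deriv \<phi> x * w x) = - (LINT x|lebesgue_on {0..r}. \<phi> x * w' x)"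
proof -
  have sm: "smooth \<phi>" using \<phi> test_fun_smooth by blast
  have "continuous_on {0..r} w"
    using w by (meson DERIV_continuous continuous_at_imp_continuous_on)
  then have cont: "continuous_on {0..r} (\<lambda>x. deriv \<phi> x * w x)" "continuous_on {0..r} (\<lambda>x. \<phi> x * w' x)"
    using continuous_on_mult[OF smooth_continuous_on[OF smooth_deriv[OF sm]]]
      continuous_on_mult[OF smooth_continuous_on[OF sm] continuous_on_subset[OF w' subset_UNIV]]
    by blast+
  have "((\<lambda>x. deriv \<phi> x * w x + \<phi> x * w' x) has_integral (\<phi> r * w r - \<phi> 0 * w 0)) {0..r}"
  proof (rule fundamental_theorem_of_calculus)
    fix x
    have "((\<lambda>x. \<phi> x * w x) has_real_derivative (deriv \<phi> x * w x + w' x * \<phi> x)) (at x)"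
      by (rule DERIV_mult[OF smooth_has_real_derivative[OF sm] w])
    then show "((\<lambda>x. \<phi> x * w x) has_vector_derivative (deriv \<phi> x * w x + \<phi> x * w' x)) (at x within {0..r})"
      by (simp add: has_real_derivative_iff_has_vector_derivative[symmetric]
          has_field_derivative_at_within mult.commute)
  qed (use r in simp)
  then have "integral {0..r} (\<lambda>x. deriv \<phi> x * w x) + integral {0..r} (\<lambda>x. \<phi> x * w' x) = 0"
    using test_fun_vanish_endpoints[OF \<phi>] cont
    by (simp add: integral_unique integral_add[symmetric] integrable_continuous_interval)
  then show ?thesis using cont by (simp add: lebesgue_integral_Icc_continuous)
qed

lemma LINT_funpow_deriv_mult_power:
  assumes r: "0 < r" and \<phi>: "test_fun r \<phi>"
  shows "(LINT x|lebesgue_on {0..r}. (deriv ^^ j) \<phi> x * x ^ j)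
       = (-1) ^ j * fact j * (LINT x|lebesgue_on {0..r}. \<phi> x)"
proof (induction j)
  case (Suc j)
  have "continuous_on UNIV (\<lambda>x::real. Suc j * x ^ j)"
    by (intro continuous_on_mult_left continuous_on_power continuous_on_id)
  then have "(LINT x|lebesgue_on {0..r}. (deriv ^^ Suc j) \<phi> x * x ^ Suc j)
      = - (LINT x|lebesgue_on {0..r}. (deriv ^^ j) \<phi> x * (Suc j * x ^ j))"
    unfolding funpow.simps comp_apply
    using DERIV_pow[of "Suc j"] by (intro test_fun_integral_by_parts[OF r test_fun_funpow_deriv[OF \<phi>]]) auto
  also have "\<dots> = - Suc j * (LINT x|lebesgue_on {0..r}. (deriv ^^ j) \<phi> x * x ^ j)"
    by (subst mult.left_commute) (simp only: integral_mult_right_zero mult_minus_left)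
  finally show ?case using Suc by (simp add: algebra_simps)
qed simp

lemma test_fun_unit_integral_exists:
  assumes r: "0 < r"
  obtains \<theta> where "test_fun r \<theta>" "(LINT x|lebesgue_on {0..r}. \<theta> x) = 1"
proof -
  define a b where "a = r/4" and "b = 3*r/4"
  have ab: "0 < a" "b < r" "a < b" using r by (auto simp: a_def b_def)
  define c where "c = (LINT x|lebesgue_on {0..r}. bump a b x)"
  have cont: "continuous_on {0..r} (bump a b)" using smooth_continuous_on smooth_bump by blast
  have "c \<ge> 0" unfolding c_def by (rule integral_nonneg_AE) (auto simp: bump_nonneg)
  moreover have "c \<noteq> 0"
  proof
    assume "c = 0"
    then have "\<forall>x\<in>{0..r}. bump a b x = 0"
      using integralL_eq_0_iff[OF cont r] bump_nonneg unfolding c_def by blast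
    moreover have "bump a b ((a+b)/2) > 0" by (rule bump_pos) (use ab in auto)
    ultimately show False using ab by force
  qed
  ultimately have "c > 0" by simp
  have "test_fun r (\<lambda>x. (1/c) * bump a b x)"
    unfolding test_fun_iff_smooth using ab bump_eq_0
    by (intro conjI smooth_mult smooth_const smooth_bump exI[of _ a] exI[of _ b]) auto
  moreover have "(LINT x|lebesgue_on {0..r}. (1/c) * bump a b x) = 1"
    using \<open>c > 0\<close> by (simp add: c_def)
  ultimately show ?thesis by (rule that)
qed

lemma integral_Icc_eq_0_outside_support:
  fixes \<psi> :: "real \<Rightarrow> real"
  assumes r: "0 \<le> r" and cont: "continuous_on UNIV \<psi>" and ab: "0 < a" "b < r"
    and vanish: "\<forall>x. x \<notin> {a..b} \<longrightarrow> \<psi> x = 0" and zero: "integral {0..r} \<psi> = 0"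
    and y: "y \<notin> {a..b}"
  shows "integral {0..y} \<psi> = 0"
proof -
  have integrable: "\<psi> integrable_on {u..v}" for u v
    by (rule integrable_continuous_interval[OF continuous_on_subset[OF cont]]) simp
  have integral_0: "integral {u..v} \<psi> = 0" if "\<And>t. t \<in> {u..v} \<Longrightarrow> \<psi> t = 0" for u v
    using integral_cong[of "{u..v}" \<psi> "\<lambda>_. 0"] that by simp
  consider "y < a" | "b < y" "r \<le> y" | "b < y" "y < r" "0 \<le> y" | "b < y" "y < 0"
    using y by force
  then show ?thesis
  proof cases
    case 1
    then show ?thesis by (intro integral_0) (use vanish in auto)
  next
    case 2
    have "integral {0..r} \<psi> + integral {r..y} \<psi> = integral {0..y} \<psi>"
      by (rule Henstock_Kurzweil_Integration.integral_combine) (use 2 r integrable in auto)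
    moreover have "integral {r..y} \<psi> = 0" by (rule integral_0) (use vanish ab in auto)
    ultimately show ?thesis using zero by simp
  next
    case 3
    have "integral {0..y} \<psi> + integral {y..r} \<psi> = integral {0..r} \<psi>"
      by (rule Henstock_Kurzweil_Integration.integral_combine) (use 3 integrable in auto)
    moreover have "integral {y..r} \<psi> = 0" by (rule integral_0) (use vanish 3 in auto)
    ultimately show ?thesis using zero by simp
  next
    case 4
    then show ?thesis by (intro integral_0) (use vanish ab in auto)
  qed
qed

lemma test_fun_primitive:
  assumes r: "0 < r" and \<psi>: "test_fun r \<psi>" and zero: "(LINT x|lebesgue_on {0..r}. \<psi> x) = 0"
  obtains \<Phi> where "test_fun r \<Phi>" "deriv \<Phi> = \<psi>"
proof -
  obtain a b where ab: "0 < a" "b < r" and vanish: "\<forall>x. x \<notin> {a..b} \<longrightarrow> \<psi> x = 0"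
    and sm: "smooth \<psi>"
    using \<psi> unfolding test_fun_iff_smooth by blast
  have cont: "continuous_on S \<psi>" for S using smooth_continuous_on sm by blast
  define \<Phi> where "\<Phi> = (\<lambda>x. integral {0..x} \<psi>)"
  have \<Phi>_vanish: "\<forall>y. y \<notin> {a..b} \<longrightarrow> \<Phi> y = 0"
    using integral_Icc_eq_0_outside_support[OF less_imp_le[OF r] cont ab vanish] zero lebesgue_integral_Icc_continuous[OF cont]
    by (simp add: \<Phi>_def)
  have D: "(\<Phi> has_real_derivative \<psi> x) (at x)" for x
  proof (cases "x \<in> {a..b}")
    case False
    then obtain S where "open S" "x \<in> S" "\<forall>y\<in>S. \<Phi> y = 0"
      using \<Phi>_vanish
      by (metis atLeastAtMost_iff greaterThan_iff lessThan_iff not_le open_greaterThan open_lessThan)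
    then have "(\<Phi> has_real_derivative 0) (at x)"
      by (intro has_field_derivative_transform_within_open[OF DERIV_const, where S=S]) auto
    moreover have "\<psi> x = 0" using vanish False by auto
    ultimately show ?thesis by simp
  next
    case True
    then have x: "0 < x" "x < r" using ab by auto
    have "(\<Phi> has_vector_derivative \<psi> x) (at x within {0..r})"
      unfolding \<Phi>_def by (rule integral_has_vector_derivative[OF cont]) (use x in auto)
    moreover have "at x within {0..r} = at x"
      by (rule at_within_interior) (use x in auto)
    ultimately show ?thesis by (simp add: has_real_derivative_iff_has_vector_derivative)
  qed
  have "deriv \<Phi> = \<psi>" by (rule deriv_eqI[OF D])
  moreover have "smooth \<Phi>"
    by (rule smoothI) (use D \<open>deriv \<Phi> = \<psi>\<close> sm real_differentiable_def in auto)
  ultimately show ?thesis using ab \<Phi>_vanish that unfolding test_fun_iff_smooth by blast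
qed

section \<open>Primitives of integrable functions\<close>

definition primitive :: "real \<Rightarrow> (real \<Rightarrow> real) \<Rightarrow> real \<Rightarrow> real" where
  "primitive r f x = (LINT t|lebesgue_on {0..r}. indicator {..x} t * f t)"

lemma measurable_indicator_mult_kernel:
  fixes f g :: "real \<Rightarrow> real"
  assumes [measurable]: "f \<in> borel_measurable (lebesgue_on {0..r})" "g \<in> borel_measurable (lebesgue_on {0..r})"
  shows "(\<lambda>(x, t). indicator {..x} t * f t * g x)
           \<in> borel_measurable (lebesgue_on {0..r} \<Otimes>\<^sub>M lebesgue_on {0..r})"
proof -
  have [measurable]: "(\<lambda>x. x) \<in> borel_measurable (lebesgue_on {0..r})"
    by (rule continuous_on_Icc_measurable) (rule continuous_on_id)
  have "(\<lambda>(x, t). indicator {..x} t * f t * g x) = (\<lambda>p. (if snd p \<le> fst p then 1 else 0) * f (snd p) * g (fst p))"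
    by (auto simp: indicator_def fun_eq_iff)
  also have "\<dots> \<in> borel_measurable (lebesgue_on {0..r} \<Otimes>\<^sub>M lebesgue_on {0..r})"
    by measurable
  finally show ?thesis .
qed

lemma integrable_indicator_mult:
  fixes f :: "real \<Rightarrow> real"
  assumes f: "integrable (lebesgue_on {0..r}) f"
  shows "integrable (lebesgue_on {0..r}) (\<lambda>t. indicator {..x} t * f t)"
proof -
  have "(\<lambda>t. indicator {..x} t :: real) = (\<lambda>t. if t \<le> x then 1 else 0)"
    by (auto simp: indicator_def)
  moreover have [measurable]: "(\<lambda>x. x) \<in> borel_measurable (lebesgue_on {0..r})"
    by (rule continuous_on_Icc_measurable) (rule continuous_on_id)
  ultimately have "(\<lambda>t. indicator {..x} t :: real) \<in> borel_measurable (lebesgue_on {0..r})"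
    by simp
  then have "integrable (lebesgue_on {0..r}) (\<lambda>t. f t * indicator {..x} t)"
    by (rule integrable_mult_bounded[OF f, where B=1]) (auto simp: indicator_def)
  then show ?thesis by (simp add: mult.commute)
qed

lemma abs_primitive_le:
  fixes f :: "real \<Rightarrow> real"
  assumes f: "integrable (lebesgue_on {0..r}) f"
  shows "\<bar>primitive r f x\<bar> \<le> (LINT t|lebesgue_on {0..r}. \<bar>f t\<bar>)"
proof -
  have "\<bar>primitive r f x\<bar> \<le> (LINT t|lebesgue_on {0..r}. \<bar>indicator {..x} t * f t\<bar>)"
    unfolding primitive_def by (rule integral_abs_bound)
  also have "\<dots> \<le> (LINT t|lebesgue_on {0..r}. \<bar>f t\<bar>)"
    using f integrable_indicator_mult[OF integrable_abs[OF f]]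
    by (intro integral_mono) (auto simp: abs_mult indicator_def)
  finally show ?thesis .
qed

lemma primitive_measurable:
  fixes f :: "real \<Rightarrow> real"
  assumes f: "integrable (lebesgue_on {0..r}) f"
  shows "primitive r f \<in> borel_measurable (lebesgue_on {0..r})"
proof -
  interpret finite_measure "lebesgue_on {0..r}" by (rule finite_measure_lebesgue_on) simp
  have "(\<lambda>(x, t). indicator {..x} t * f t * 1)
          \<in> borel_measurable (lebesgue_on {0..r} \<Otimes>\<^sub>M lebesgue_on {0..r})"
    using f by (intro measurable_indicator_mult_kernel) auto
  then have "(\<lambda>(x, t). indicator {..x} t * f t)
               \<in> borel_measurable (lebesgue_on {0..r} \<Otimes>\<^sub>M lebesgue_on {0..r})"
    by simp
  then show ?thesis
    unfolding primitive_def
    by (rule borel_measurable_lebesgue_integral[of "\<lambda>x t. indicator {..x} t * f t", simplified])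
qed

lemma LINT_indicator_mult_deriv_test_fun:
  assumes \<phi>: "test_fun r \<phi>" and t: "t \<in> {0..r}"
  shows "(LINT x|lebesgue_on {0..r}. indicator {..x} t * deriv \<phi> x) = - \<phi> t"
proof -
  have sm: "smooth \<phi>" using \<phi> test_fun_smooth by blast
  have "(LINT x|lebesgue_on {0..r}. indicator {..x} t * deriv \<phi> x)
      = (LINT x|lebesgue_on {0..r}. (if x \<in> {t..} then deriv \<phi> x else 0))"
    by (rule Bochner_Integration.integral_cong) (auto simp: indicator_def)
  also have "\<dots> = (LINT x|lebesgue_on ({t..} \<inter> {0..r}). deriv \<phi> x)"
    by (rule Lebesgue_Measure.integral_restrict_Int) auto
  also have "{t..} \<inter> {0..r} = {t..r}" using t by auto
  also have "(LINT x|lebesgue_on {t..r}. deriv \<phi> x) = integral {t..r} (deriv \<phi>)"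
    by (rule lebesgue_integral_Icc_continuous[OF smooth_continuous_on[OF smooth_deriv[OF sm]]])
  also have "\<dots> = \<phi> r - \<phi> t"
  proof (rule integral_unique, rule fundamental_theorem_of_calculus)
    show "t \<le> r" using t by auto
    fix x
    show "(\<phi> has_vector_derivative deriv \<phi> x) (at x within {t..r})"
      using smooth_has_real_derivative[OF sm]
      by (simp add: has_real_derivative_iff_has_vector_derivative[symmetric] has_field_derivative_at_within)
  qed
  finally show ?thesis using test_fun_vanish_endpoints[OF \<phi>] by simp
qed

text \<open>By Fubini, \<open>\<integral>_0^r (\<integral>_0^x f) \<phi>'(x) dx = \<integral>_0^r f(t) (\<integral>_t^r \<phi>') dt = - \<integral>_0^r f \<phi>\<close>.\<close>

lemma LINT_mult_test_fun_eq_primitive: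
  fixes f :: "real \<Rightarrow> real"
  assumes r: "0 < r" and f: "integrable (lebesgue_on {0..r}) f" and \<phi>: "test_fun r \<phi>"
  shows "(LINT x|lebesgue_on {0..r}. f x * \<phi> x)
       = - (LINT x|lebesgue_on {0..r}. primitive r f x * deriv \<phi> x)"
proof -
  let ?M = "lebesgue_on {0..r}"
  interpret M: finite_measure ?M by (rule finite_measure_lebesgue_on) simp
  interpret P: pair_sigma_finite ?M ?M by unfold_locales
  have fm[measurable]: "f \<in> borel_measurable ?M" using f by auto
  have cont: "continuous_on {0..r} (deriv \<phi>)"
    using continuous_on_test_fun[OF test_fun_deriv[OF \<phi>]] .
  have dm[measurable]: "deriv \<phi> \<in> borel_measurable ?M" by (rule continuous_on_Icc_measurable[OF cont])
  obtain B where B0: "0 \<le> B" and B: "\<forall>x\<in>{0..r}. \<bar>deriv \<phi> x\<bar> \<le> B"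
    using bounded_funpow_deriv_test_fun[OF \<phi>, of 1] by auto
  define K where "K = (\<lambda>x t. indicator {..x} t * f t * deriv \<phi> x)"
  have Km: "case_prod K \<in> borel_measurable (?M \<Otimes>\<^sub>M ?M)"
    unfolding K_def by (rule measurable_indicator_mult_kernel[OF fm dm])
  have K_bound: "(LINT t|?M. norm (K x t)) \<le> (LINT t|?M. B * \<bar>f t\<bar>)" if x: "x \<in> {0..r}" for x
  proof (rule integral_mono)
    have "integrable ?M (\<lambda>t. (indicator {..x} t * \<bar>f t\<bar>) * \<bar>deriv \<phi> x\<bar>)"
      by (intro integrable_mult_left integrable_indicator_mult integrable_abs f)
    then show "integrable ?M (\<lambda>t. norm (K x t))"
      by (simp add: K_def indicator_def abs_mult)
    show "integrable ?M (\<lambda>t. B * \<bar>f t\<bar>)" using f by simp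
    fix t
    have "\<bar>indicator {..x} t * f t * deriv \<phi> x\<bar> \<le> \<bar>f t\<bar> * B"
      using B B0 x by (auto simp: indicator_def abs_mult intro!: mult_left_mono)
    then show "norm (K x t) \<le> B * \<bar>f t\<bar>" by (simp add: K_def mult.commute)
  qed
  have "integrable (?M \<Otimes>\<^sub>M ?M) (case_prod K)"
  proof (rule P.Fubini_integrable[OF Km])
    have "(\<lambda>x. LINT t|?M. norm (case_prod K (x, t))) \<in> borel_measurable ?M"
      using Km by measurable
    moreover have "\<forall>x\<in>{0..r}. \<bar>LINT t|?M. norm (case_prod K (x, t))\<bar> \<le> B * (LINT t|?M. \<bar>f t\<bar>)"
      using K_bound by (simp add: integral_nonneg_AE)
    ultimately show "integrable ?M (\<lambda>x. LINT t|?M. norm (case_prod K (x, t)))"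
      by (rule integrable_bounded_Icc)
    show "AE x in ?M. integrable ?M (\<lambda>t. case_prod K (x, t))"
      unfolding K_def using integrable_indicator_mult[OF f] by simp
  qed
  then have "(LINT t|?M. (LINT x|?M. K x t)) = (LINT x|?M. (LINT t|?M. K x t))"
    by (rule P.Fubini_integral)
  moreover have "(LINT x|?M. (LINT t|?M. K x t)) = (LINT x|?M. primitive r f x * deriv \<phi> x)"
    unfolding K_def primitive_def by simp
  moreover have "(LINT t|?M. (LINT x|?M. K x t)) = (LINT t|?M. - (f t * \<phi> t))"
  proof (rule Bochner_Integration.integral_cong)
    fix t assume "t \<in> space ?M"
    then show "(LINT x|?M. K x t) = - (f t * \<phi> t)"
      using LINT_indicator_mult_deriv_test_fun[OF \<phi>, of t] by (simp add: K_def mult_ac)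
  qed simp
  ultimately show ?thesis by simp
qed

section \<open>Distributional derivatives\<close>

text \<open>\<open>weak_deriv_eq r n u w\<close> says \<open>D^(n+1) u = D^n w\<close> on \<open>(0, r)\<close> in the sense of distributions.\<close>

definition weak_deriv_eq :: "real \<Rightarrow> nat \<Rightarrow> (real \<Rightarrow> real) \<Rightarrow> (real \<Rightarrow> real) \<Rightarrow> bool" where
  "weak_deriv_eq r n u w \<longleftrightarrow> (\<forall>\<phi>. test_fun r \<phi> \<longrightarrow>
     (LINT x|lebesgue_on {0..r}. u x * (deriv ^^ Suc n) \<phi> x)
     = - (LINT x|lebesgue_on {0..r}. w x * (deriv ^^ n) \<phi> x))"

lemma weak_deriv_eq_0_iff:
  "weak_deriv_eq r 0 u g \<longleftrightarrow> (\<forall>\<phi>. test_fun r \<phi> \<longrightarrow>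
     - (LINT x|lebesgue_on {0..r}. u x * deriv \<phi> x) = (LINT x|lebesgue_on {0..r}. g x * \<phi> x))"
  unfolding weak_deriv_eq_def by auto

text \<open>\<open>weak_deriv_eq_sum r m u f\<close> says \<open>D^(m+1) u = f_0 + D f_1 + \<dots> + D^m f_m\<close> on \<open>(0, r)\<close>.\<close>

definition weak_deriv_eq_sum :: "real \<Rightarrow> nat \<Rightarrow> (real \<Rightarrow> real) \<Rightarrow> (nat \<Rightarrow> real \<Rightarrow> real) \<Rightarrow> bool" where
  "weak_deriv_eq_sum r m u f \<longleftrightarrow> (\<forall>\<phi>. test_fun r \<phi> \<longrightarrow>
     (-1) ^ Suc m * (LINT x|lebesgue_on {0..r}. u x * (deriv ^^ Suc m) \<phi> x) =
     (\<Sum>j<Suc m. (-1) ^ j * (LINT x|lebesgue_on {0..r}. f j x * (deriv ^^ j) \<phi> x)))"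

lemma add_le_one_plus_power_mult:
  fixes r a s :: real
  assumes "0 \<le> r" "0 \<le> a" "0 \<le> s"
  shows "a + r * ((1 + r)^m * s) \<le> (1 + r)^Suc m * (a + s)"
proof -
  have "a \<le> (1 + r)^Suc m * a"
    using assms one_le_power[of "1 + r" "Suc m"] mult_right_mono[of 1 "(1 + r)^Suc m" a] by simp
  moreover have "r * ((1 + r)^m * s) \<le> (1 + r)^Suc m * s"
    using assms mult_right_mono[of "r * (1 + r)^m" "(1 + r)^Suc m" s] by (simp add: mult.assoc)
  ultimately show ?thesis by (simp add: distrib_left)
qed

lemma lower_order_terms_collapse:
  fixes f :: "nat \<Rightarrow> real \<Rightarrow> real"
  assumes r: "0 < r"
  shows "(\<forall>j\<le>m. integrable (lebesgue_on {0..r}) (f j)) \<Longrightarrow>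
    \<exists>G. G \<in> borel_measurable (lebesgue_on {0..r}) \<and>
      (\<forall>x\<in>{0..r}. \<bar>G x\<bar> \<le> (1+r)^m * (\<Sum>j<m. LINT x|lebesgue_on {0..r}. \<bar>f j x\<bar>)) \<and>
      (\<forall>\<phi>. test_fun r \<phi> \<longrightarrow>
        (\<Sum>j<Suc m. (-1)^j * (LINT x|lebesgue_on {0..r}. f j x * (deriv ^^ j) \<phi> x))
        = (-1)^m * (LINT x|lebesgue_on {0..r}. (f m x + G x) * (deriv ^^ m) \<phi> x))"
proof (induction m)
  case 0
  show ?case by (rule exI[of _ "\<lambda>x. 0"]) auto
next
  case (Suc m)
  let ?M = "lebesgue_on {0..r}"
  let ?S = "\<lambda>m. \<Sum>j<m. LINT x|?M. \<bar>f j x\<bar>"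
  obtain G where Gm: "G \<in> borel_measurable ?M"
    and Gb: "\<forall>x\<in>{0..r}. \<bar>G x\<bar> \<le> (1+r)^m * ?S m"
    and G: "\<And>\<phi>. test_fun r \<phi> \<Longrightarrow>
        (\<Sum>j<Suc m. (-1)^j * (LINT x|?M. f j x * (deriv ^^ j) \<phi> x))
        = (-1)^m * (LINT x|?M. (f m x + G x) * (deriv ^^ m) \<phi> x)"
    using Suc by fastforce
  have fm: "integrable ?M (f m)" and fSm: "integrable ?M (f (Suc m))" using Suc.prems by auto
  define H where "H = (\<lambda>x. f m x + G x)"
  have H: "integrable ?M H" unfolding H_def by (rule LINT_abs_add_bounded(1)[OF _ fm Gm Gb]) (use r in auto)
  have "(LINT x|?M. \<bar>H x\<bar>) \<le> (LINT x|?M. \<bar>f m x\<bar>) + r * ((1+r)^m * ?S m)"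
    unfolding H_def by (rule LINT_abs_add_bounded(2)[OF _ fm Gm Gb]) (use r in auto)
  also have "\<dots> \<le> (1+r)^Suc m * ((LINT x|?M. \<bar>f m x\<bar>) + ?S m)"
    using r by (intro add_le_one_plus_power_mult LINT_abs_nonneg sum_nonneg) auto
  finally have H_bound: "(LINT x|?M. \<bar>H x\<bar>) \<le> (1+r)^Suc m * ?S (Suc m)"
    by (simp add: algebra_simps)
  show ?case
  proof (intro exI[of _ "primitive r H"] conjI allI impI ballI)
    show "primitive r H \<in> borel_measurable ?M" by (rule primitive_measurable[OF H])
    fix x show "\<bar>primitive r H x\<bar> \<le> (1+r)^Suc m * ?S (Suc m)"
      using abs_primitive_le[OF H] H_bound by (rule order_trans)
  next
    fix \<phi> assume \<phi>: "test_fun r \<phi>"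
    have "(LINT x|?M. H x * (deriv ^^ m) \<phi> x) = - (LINT x|?M. primitive r H x * (deriv ^^ Suc m) \<phi> x)"
      unfolding funpow.simps comp_apply
      by (rule LINT_mult_test_fun_eq_primitive[OF r H test_fun_funpow_deriv[OF \<phi>]])
    moreover have "(LINT x|?M. (f (Suc m) x + primitive r H x) * (deriv ^^ Suc m) \<phi> x)
        = (LINT x|?M. f (Suc m) x * (deriv ^^ Suc m) \<phi> x) + (LINT x|?M. primitive r H x * (deriv ^^ Suc m) \<phi> x)"
      unfolding distrib_right
      using abs_primitive_le[OF H] primitive_measurable[OF H]
      by (intro Bochner_Integration.integral_add integrable_mult_funpow_deriv_test_fun \<phi> fSm
          integrable_bounded_Icc) auto
    ultimately show "(\<Sum>j<Suc (Suc m). (-1)^j * (LINT x|?M. f j x * (deriv ^^ j) \<phi> x))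
        = (-1)^Suc m * (LINT x|?M. (f (Suc m) x + primitive r H x) * (deriv ^^ Suc m) \<phi> x)"
      using G[OF \<phi>] by (simp add: H_def algebra_simps)
  qed
qed

lemma LINT_mult_add_scaled:
  fixes u a b :: "real \<Rightarrow> real"
  assumes "integrable M (\<lambda>x. u x * a x)" "integrable M (\<lambda>x. u x * b x)"
  shows "(LINT x|M. u x * (a x + c * b x)) = (LINT x|M. u x * a x) + c * (LINT x|M. u x * b x)"
proof -
  have "(LINT x|M. u x * (a x + c * b x)) = (LINT x|M. u x * a x + c * (u x * b x))"
    by (simp add: algebra_simps)
  also have "\<dots> = (LINT x|M. u x * a x) + (LINT x|M. c * (u x * b x))"
    using assms by (intro Bochner_Integration.integral_add) auto
  finally show ?thesis by simp
qed

text \<open>If \<open>D^(n+2) u = D^(n+1) w\<close>, then \<open>D^(n+1) u - D^n w\<close> is a constant, equal to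
  \<open>D^n (c x^n)\<close>. A test function \<open>\<phi>\<close> splits as \<open>\<Phi>' + (\<integral>\<phi>) \<theta>\<close> with \<open>\<Phi>\<close> a test function: the
  hypothesis handles \<open>\<Phi>'\<close>, testing with \<open>\<theta>\<close> yields the constant, and the moments
  \<open>\<integral> D^n \<phi> \<cdot> x^n = (-1)^n n! \<integral>\<phi>\<close> determine \<open>c\<close>.\<close>

lemma weak_deriv_eq_lower_order:
  fixes u w \<theta> :: "real \<Rightarrow> real"
  assumes r: "0 < r" and \<theta>: "test_fun r \<theta>" and \<theta>1: "(LINT x|lebesgue_on {0..r}. \<theta> x) = 1"
    and u: "integrable (lebesgue_on {0..r}) u" and w: "integrable (lebesgue_on {0..r}) w"
    and eq: "weak_deriv_eq r (Suc n) u w"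
  defines "c \<equiv> - ((-1)^n / fact n) * ((LINT x|lebesgue_on {0..r}. w x * (deriv ^^ n) \<theta> x)
                                   + (LINT x|lebesgue_on {0..r}. u x * (deriv ^^ Suc n) \<theta> x))"
  shows "weak_deriv_eq r n u (\<lambda>x. w x + c * x ^ n)"
  unfolding weak_deriv_eq_def
proof (intro allI impI)
  fix \<phi> assume \<phi>: "test_fun r \<phi>"
  let ?M = "lebesgue_on {0..r}"
  define c0 where "c0 = (LINT x|?M. \<phi> x)"
  define \<psi> where "\<psi> = (\<lambda>x. \<phi> x + (- c0) * \<theta> x)"
  have \<psi>: "test_fun r \<psi>" unfolding \<psi>_def by (rule test_fun_add_scaled[OF \<phi> \<theta>])
  have "(LINT x|?M. \<psi> x) = c0 + (- c0) * (LINT x|?M. \<theta> x)"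
    unfolding \<psi>_def c0_def
    by (subst Bochner_Integration.integral_add)
       (auto intro: continuous_imp_integrable_real continuous_on_test_fun \<phi> \<theta>)
  then obtain \<Phi> where \<Phi>: "test_fun r \<Phi>" and d\<Phi>: "deriv \<Phi> = \<psi>"
    using test_fun_primitive[OF r \<psi>] \<theta>1 by auto
  have sm: "smooth \<phi>" "smooth \<theta>" using \<phi> \<theta> test_fun_smooth by auto
  have D: "(deriv ^^ Suc j) \<Phi> = (\<lambda>x. (deriv ^^ j) \<phi> x + (- c0) * (deriv ^^ j) \<theta> x)" for j
    unfolding funpow_deriv_Suc_right d\<Phi> \<psi>_def by (rule funpow_deriv_add_scaled[OF sm])
  define A1 where "A1 = (LINT x|?M. u x * (deriv ^^ Suc n) \<phi> x)"
  define A2 where "A2 = (LINT x|?M. u x * (deriv ^^ Suc n) \<theta> x)"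
  define W1 where "W1 = (LINT x|?M. w x * (deriv ^^ n) \<phi> x)"
  define W2 where "W2 = (LINT x|?M. w x * (deriv ^^ n) \<theta> x)"
  define P where "P = (LINT x|?M. (deriv ^^ n) \<phi> x * x ^ n)"
  have "(LINT x|?M. u x * (deriv ^^ Suc (Suc n)) \<Phi> x) = - (LINT x|?M. w x * (deriv ^^ Suc n) \<Phi> x)"
    using eq \<Phi> unfolding weak_deriv_eq_def by blast
  moreover have "(LINT x|?M. u x * (deriv ^^ Suc (Suc n)) \<Phi> x) = A1 + (- c0) * A2"
    unfolding D A1_def A2_def
    by (rule LINT_mult_add_scaled[OF integrable_mult_funpow_deriv_test_fun[OF u \<phi>]
          integrable_mult_funpow_deriv_test_fun[OF u \<theta>]])
  moreover have "(LINT x|?M. w x * (deriv ^^ Suc n) \<Phi> x) = W1 + (- c0) * W2"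
    unfolding D W1_def W2_def
    by (rule LINT_mult_add_scaled[OF integrable_mult_funpow_deriv_test_fun[OF w \<phi>]
          integrable_mult_funpow_deriv_test_fun[OF w \<theta>]])
  moreover have "c * P = - (W2 + A2) * c0"
  proof -
    have "P = (-1)^n * fact n * c0"
      unfolding P_def c0_def by (rule LINT_funpow_deriv_mult_power[OF r \<phi>])
    moreover have "(-1::real)^n * (-1)^n = 1" by (simp flip: power_mult_distrib)
    ultimately show ?thesis unfolding c_def W2_def A2_def by (simp add: field_simps)
  qed
  moreover have "(LINT x|?M. (w x + c * x ^ n) * (deriv ^^ n) \<phi> x) = W1 + c * P"
  proof -
    have "integrable ?M (\<lambda>x. c * ((deriv ^^ n) \<phi> x * x ^ n))"
      by (intro integrable_mult_right continuous_imp_integrable_real continuous_on_mult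
          continuous_on_test_fun[OF test_fun_funpow_deriv[OF \<phi>]] continuous_on_power continuous_on_id)
    then show ?thesis
      unfolding W1_def P_def
      by (simp add: algebra_simps Bochner_Integration.integral_add[OF integrable_mult_funpow_deriv_test_fun[OF w \<phi>]])
  qed
  ultimately show "(LINT x|?M. u x * (deriv ^^ Suc n) \<phi> x) = - (LINT x|?M. (w x + c * x ^ n) * (deriv ^^ n) \<phi> x)"
    unfolding A1_def[symmetric] by (simp add: algebra_simps)
qed

lemma abs_weak_deriv_constant_le:
  fixes u w \<theta> :: "real \<Rightarrow> real"
  assumes \<theta>: "test_fun r \<theta>"
    and u: "integrable (lebesgue_on {0..r}) u" and w: "integrable (lebesgue_on {0..r}) w"
    and M: "\<forall>x\<in>{0..r}. \<bar>(deriv ^^ n) \<theta> x\<bar> \<le> M" "\<forall>x\<in>{0..r}. \<bar>(deriv ^^ Suc n) \<theta> x\<bar> \<le> M"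
  shows "\<bar>((-1)^n / fact n) * ((LINT x|lebesgue_on {0..r}. w x * (deriv ^^ n) \<theta> x)
                                 + (LINT x|lebesgue_on {0..r}. u x * (deriv ^^ Suc n) \<theta> x))\<bar>
         \<le> M * ((LINT x|lebesgue_on {0..r}. \<bar>w x\<bar>) + (LINT x|lebesgue_on {0..r}. \<bar>u x\<bar>))"
proof -
  let ?M = "lebesgue_on {0..r}"
  define K where "K = (LINT x|?M. w x * (deriv ^^ n) \<theta> x) + (LINT x|?M. u x * (deriv ^^ Suc n) \<theta> x)"
  have "\<bar>((-1)^n / fact n) * K\<bar> = \<bar>K\<bar> / fact n" by (simp add: abs_mult)
  also have "\<dots> \<le> \<bar>K\<bar>"
    using mult_left_mono[OF fact_ge_1[where 'a=real] abs_ge_zero[of K]] by (simp add: divide_le_eq)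
  also have "\<dots> \<le> M * ((LINT x|?M. \<bar>w x\<bar>) + (LINT x|?M. \<bar>u x\<bar>))"
  proof -
    have meas: "(deriv ^^ j) \<theta> \<in> borel_measurable ?M" for j
      by (rule continuous_on_Icc_measurable[OF continuous_on_test_fun[OF test_fun_funpow_deriv[OF \<theta>]]])
    have "\<bar>LINT x|?M. w x * (deriv ^^ n) \<theta> x\<bar> \<le> M * (LINT x|?M. \<bar>w x\<bar>)"
      by (rule abs_LINT_mult_le[OF w meas]) (use M(1) in simp)
    moreover have "\<bar>LINT x|?M. u x * (deriv ^^ Suc n) \<theta> x\<bar> \<le> M * (LINT x|?M. \<bar>u x\<bar>)"
      by (rule abs_LINT_mult_le[OF u meas]) (use M(2) in simp)
    ultimately show ?thesis unfolding K_def by (simp add: distrib_left)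
  qed
  finally show ?thesis unfolding K_def .
qed

lemma weak_deriv_eq_lower_order_bounded:
  fixes u f B \<theta> :: "real \<Rightarrow> real"
  assumes r: "0 < r" and \<theta>: "test_fun r \<theta>" and \<theta>1: "(LINT x|lebesgue_on {0..r}. \<theta> x) = 1"
    and M: "\<forall>x\<in>{0..r}. \<bar>(deriv ^^ n) \<theta> x\<bar> \<le> M" "\<forall>x\<in>{0..r}. \<bar>(deriv ^^ Suc n) \<theta> x\<bar> \<le> M"
    and u: "integrable (lebesgue_on {0..r}) u" and f: "integrable (lebesgue_on {0..r}) f"
    and B: "B \<in> borel_measurable (lebesgue_on {0..r})" "\<forall>x\<in>{0..r}. \<bar>B x\<bar> \<le> c * S"
    and S: "(LINT x|lebesgue_on {0..r}. \<bar>f x\<bar>) + (LINT x|lebesgue_on {0..r}. \<bar>u x\<bar>) \<le> S"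
    and eq: "weak_deriv_eq r (Suc n) u (\<lambda>x. f x + B x)"
  shows "\<exists>B'. B' \<in> borel_measurable (lebesgue_on {0..r}) \<and>
    (\<forall>x\<in>{0..r}. \<bar>B' x\<bar> \<le> (c + M * r^n * (1 + r * c)) * S) \<and> weak_deriv_eq r n u (\<lambda>x. f x + B' x)"
proof -
  let ?M = "lebesgue_on {0..r}"
  have M0: "0 \<le> M" using M(1) r by force
  define w where "w = (\<lambda>x. f x + B x)"
  have w: "integrable ?M w"
    unfolding w_def by (rule LINT_abs_add_bounded(1)[OF _ f B]) (use r in auto)
  have w_bound: "(LINT x|?M. \<bar>w x\<bar>) \<le> (LINT x|?M. \<bar>f x\<bar>) + r * (c * S)"
    unfolding w_def by (rule LINT_abs_add_bounded(2)[OF _ f B]) (use r in auto)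
  define \<kappa> where "\<kappa> = - ((-1)^n / fact n) * ((LINT x|?M. w x * (deriv ^^ n) \<theta> x)
                                     + (LINT x|?M. u x * (deriv ^^ Suc n) \<theta> x))"
  have "weak_deriv_eq r n u (\<lambda>x. w x + \<kappa> * x ^ n)"
    unfolding \<kappa>_def by (rule weak_deriv_eq_lower_order[OF r \<theta> \<theta>1 u w eq[folded w_def]])
  then have eq': "weak_deriv_eq r n u (\<lambda>x. f x + (B x + \<kappa> * x ^ n))"
    by (simp add: w_def add.assoc)
  have "\<bar>\<kappa>\<bar> \<le> M * ((LINT x|?M. \<bar>w x\<bar>) + (LINT x|?M. \<bar>u x\<bar>))"
    using abs_weak_deriv_constant_le[OF \<theta> u w M] unfolding \<kappa>_def by simp
  also have "\<dots> \<le> M * (((LINT x|?M. \<bar>f x\<bar>) + (LINT x|?M. \<bar>u x\<bar>)) + r * c * S)"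
    using w_bound M0 by (intro mult_left_mono) auto
  also have "\<dots> \<le> M * (S + r * c * S)"
    using S M0 by (intro mult_left_mono add_right_mono) auto
  also have "\<dots> = M * (1 + r * c) * S"
    by (simp add: algebra_simps)
  finally have \<kappa>_bound: "\<bar>\<kappa>\<bar> \<le> M * (1 + r * c) * S" .
  have "\<bar>B x + \<kappa> * x ^ n\<bar> \<le> (c + M * r^n * (1 + r * c)) * S" if x: "x \<in> {0..r}" for x
  proof -
    have "\<bar>B x + \<kappa> * x ^ n\<bar> \<le> \<bar>B x\<bar> + \<bar>\<kappa>\<bar> * \<bar>x ^ n\<bar>"
      by (metis abs_mult abs_triangle_ineq)
    also have "\<dots> \<le> c * S + (M * (1 + r * c) * S) * r ^ n"
      using B(2) x \<kappa>_bound by (intro add_mono mult_mono) (auto intro: power_mono)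
    also have "\<dots> = (c + M * r^n * (1 + r * c)) * S"
      by (simp add: algebra_simps)
    finally show ?thesis .
  qed
  moreover have "(\<lambda>x. B x + \<kappa> * x ^ n) \<in> borel_measurable ?M"
    using B(1) continuous_on_Icc_measurable[of 0 r "\<lambda>x. x ^ n"] by (simp add: continuous_on_power)
  ultimately show ?thesis using eq' by blast
qed

lemma weak_deriv_eq_first_order:
  assumes r: "0 < r"
  shows "0 \<le> c \<Longrightarrow> \<exists>C\<ge>0. \<forall>u f B S.
    integrable (lebesgue_on {0..r}) u \<longrightarrow> integrable (lebesgue_on {0..r}) f \<longrightarrow>
    B \<in> borel_measurable (lebesgue_on {0..r}) \<longrightarrow> (\<forall>x\<in>{0..r}. \<bar>B x\<bar> \<le> c * S) \<longrightarrow>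
    (LINT x|lebesgue_on {0..r}. \<bar>f x\<bar>) + (LINT x|lebesgue_on {0..r}. \<bar>u x\<bar>) \<le> S \<longrightarrow>
    weak_deriv_eq r n u (\<lambda>x. f x + B x) \<longrightarrow>
    (\<exists>B'. B' \<in> borel_measurable (lebesgue_on {0..r}) \<and> (\<forall>x\<in>{0..r}. \<bar>B' x\<bar> \<le> C * S) \<and>
          weak_deriv_eq r 0 u (\<lambda>x. f x + B' x))"
proof (induction n arbitrary: c)
  case 0
  then show ?case by (intro exI[of _ c] conjI allI impI) blast+
next
  case (Suc n)
  obtain \<theta> where \<theta>: "test_fun r \<theta>" and \<theta>1: "(LINT x|lebesgue_on {0..r}. \<theta> x) = 1"
    using test_fun_unit_integral_exists[OF r] .
  obtain M1 where M1: "0 \<le> M1" "\<forall>x\<in>{0..r}. \<bar>(deriv ^^ n) \<theta> x\<bar> \<le> M1"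
    using bounded_funpow_deriv_test_fun[OF \<theta>] .
  obtain M2 where M2: "0 \<le> M2" "\<forall>x\<in>{0..r}. \<bar>(deriv ^^ Suc n) \<theta> x\<bar> \<le> M2"
    using bounded_funpow_deriv_test_fun[OF \<theta>] .
  have M: "0 \<le> M1 + M2" "\<forall>x\<in>{0..r}. \<bar>(deriv ^^ n) \<theta> x\<bar> \<le> M1 + M2"
    "\<forall>x\<in>{0..r}. \<bar>(deriv ^^ Suc n) \<theta> x\<bar> \<le> M1 + M2"
    using M1 M2 by (auto intro: add_increasing add_increasing2)
  have c': "0 \<le> c + (M1 + M2) * r^n * (1 + r * c)" using Suc.prems M(1) r by simp
  obtain C where "0 \<le> C" and C: "\<And>u f B S.
    integrable (lebesgue_on {0..r}) u \<Longrightarrow> integrable (lebesgue_on {0..r}) f \<Longrightarrow>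
    B \<in> borel_measurable (lebesgue_on {0..r}) \<Longrightarrow>
    \<forall>x\<in>{0..r}. \<bar>B x\<bar> \<le> (c + (M1 + M2) * r^n * (1 + r * c)) * S \<Longrightarrow>
    (LINT x|lebesgue_on {0..r}. \<bar>f x\<bar>) + (LINT x|lebesgue_on {0..r}. \<bar>u x\<bar>) \<le> S \<Longrightarrow>
    weak_deriv_eq r n u (\<lambda>x. f x + B x) \<Longrightarrow>
    (\<exists>B'. B' \<in> borel_measurable (lebesgue_on {0..r}) \<and> (\<forall>x\<in>{0..r}. \<bar>B' x\<bar> \<le> C * S) \<and>
          weak_deriv_eq r 0 u (\<lambda>x. f x + B' x))"
    using Suc.IH[OF c'] by blast
  show ?case
  proof (intro exI[of _ C] conjI allI impI \<open>0 \<le> C\<close>)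
    fix u f B S
    assume u: "integrable (lebesgue_on {0..r}) u" and f: "integrable (lebesgue_on {0..r}) f"
      and B: "B \<in> borel_measurable (lebesgue_on {0..r})" "\<forall>x\<in>{0..r}. \<bar>B x\<bar> \<le> c * S"
      and S: "(LINT x|lebesgue_on {0..r}. \<bar>f x\<bar>) + (LINT x|lebesgue_on {0..r}. \<bar>u x\<bar>) \<le> S"
      and eq: "weak_deriv_eq r (Suc n) u (\<lambda>x. f x + B x)"
    obtain B' where "B' \<in> borel_measurable (lebesgue_on {0..r})"
      "\<forall>x\<in>{0..r}. \<bar>B' x\<bar> \<le> (c + (M1 + M2) * r^n * (1 + r * c)) * S"
      "weak_deriv_eq r n u (\<lambda>x. f x + B' x)"
      using weak_deriv_eq_lower_order_bounded[OF r \<theta> \<theta>1 M(2,3) u f B S eq] by blast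
    then show "\<exists>B'. B' \<in> borel_measurable (lebesgue_on {0..r}) \<and> (\<forall>x\<in>{0..r}. \<bar>B' x\<bar> \<le> C * S) \<and>
          weak_deriv_eq r 0 u (\<lambda>x. f x + B' x)"
      by (rule C[OF u f _ _ S])
  qed
qed

lemma weak_deriv_eq_sum_imp_weak_deriv_eq:
  assumes "weak_deriv_eq_sum r m u f"
    and "\<And>\<phi>. test_fun r \<phi> \<Longrightarrow>
      (\<Sum>j<Suc m. (-1)^j * (LINT x|lebesgue_on {0..r}. f j x * (deriv ^^ j) \<phi> x))
      = (-1)^m * (LINT x|lebesgue_on {0..r}. w x * (deriv ^^ m) \<phi> x)"
  shows "weak_deriv_eq r m u w"
  unfolding weak_deriv_eq_def
proof (intro allI impI)
  fix \<phi> assume "test_fun r \<phi>"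
  then have "(-1)^m * (- (LINT x|lebesgue_on {0..r}. u x * (deriv ^^ Suc m) \<phi> x)
                       - (LINT x|lebesgue_on {0..r}. w x * (deriv ^^ m) \<phi> x)) = (0::real)"
    using assms unfolding weak_deriv_eq_sum_def by (simp add: algebra_simps)
  then show "(LINT x|lebesgue_on {0..r}. u x * (deriv ^^ Suc m) \<phi> x)
             = - (LINT x|lebesgue_on {0..r}. w x * (deriv ^^ m) \<phi> x)"
    by simp
qed

lemma weak_deriv_first_order_bound:
  assumes r: "0 < r"
  shows "\<exists>C\<ge>0. \<forall>u f. integrable (lebesgue_on {0..r}) u \<longrightarrow>
    (\<forall>j\<le>m. integrable (lebesgue_on {0..r}) (f j)) \<longrightarrow>
    weak_deriv_eq_sum r m u f \<longrightarrow>
    (\<exists>B. B \<in> borel_measurable (lebesgue_on {0..r}) \<and>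
      (\<forall>x\<in>{0..r}. \<bar>B x\<bar> \<le> C * ((LINT x|lebesgue_on {0..r}. \<bar>f m x\<bar>)
          + ((LINT x|lebesgue_on {0..r}. \<bar>u x\<bar>) + (\<Sum>j<m. LINT x|lebesgue_on {0..r}. \<bar>f j x\<bar>)))) \<and>
      weak_deriv_eq r 0 u (\<lambda>x. f m x + B x))"
proof -
  let ?M = "lebesgue_on {0..r}"
  have "0 \<le> (1 + r) ^ m" using r by simp
  from weak_deriv_eq_first_order[OF r this, of m]
  obtain C where "0 \<le> C" and C: "\<And>u f B S.
    integrable ?M u \<Longrightarrow> integrable ?M f \<Longrightarrow>
    B \<in> borel_measurable ?M \<Longrightarrow> \<forall>x\<in>{0..r}. \<bar>B x\<bar> \<le> (1+r)^m * S \<Longrightarrow>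
    (LINT x|?M. \<bar>f x\<bar>) + (LINT x|?M. \<bar>u x\<bar>) \<le> S \<Longrightarrow> weak_deriv_eq r m u (\<lambda>x. f x + B x) \<Longrightarrow>
    (\<exists>B'. B' \<in> borel_measurable ?M \<and> (\<forall>x\<in>{0..r}. \<bar>B' x\<bar> \<le> C * S) \<and>
          weak_deriv_eq r 0 u (\<lambda>x. f x + B' x))"
    by blast
  show ?thesis
  proof (intro exI[of _ C] conjI allI impI \<open>0 \<le> C\<close>)
    fix u f
    assume u: "integrable ?M u" and f: "\<forall>j\<le>m. integrable ?M (f j)"
      and hyp: "weak_deriv_eq_sum r m u f"
    define S where "S = (LINT x|?M. \<bar>f m x\<bar>) + ((LINT x|?M. \<bar>u x\<bar>) + (\<Sum>j<m. LINT x|?M. \<bar>f j x\<bar>))"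
    obtain G where G: "G \<in> borel_measurable ?M"
      and G_bound: "\<forall>x\<in>{0..r}. \<bar>G x\<bar> \<le> (1+r)^m * (\<Sum>j<m. LINT x|?M. \<bar>f j x\<bar>)"
      and G_eq: "\<And>\<phi>. test_fun r \<phi> \<Longrightarrow>
        (\<Sum>j<Suc m. (-1)^j * (LINT x|?M. f j x * (deriv ^^ j) \<phi> x))
        = (-1)^m * (LINT x|?M. (f m x + G x) * (deriv ^^ m) \<phi> x)"
      using lower_order_terms_collapse[OF r f] by blast
    have "weak_deriv_eq r m u (\<lambda>x. f m x + G x)"
      by (rule weak_deriv_eq_sum_imp_weak_deriv_eq[OF hyp]) (use G_eq in blast)
    moreover have "(\<Sum>j<m. LINT x|?M. \<bar>f j x\<bar>) \<le> S" "(LINT x|?M. \<bar>f m x\<bar>) + (LINT x|?M. \<bar>u x\<bar>) \<le> S"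
      using sum_nonneg[of "{..<m}" "\<lambda>j. LINT x|?M. \<bar>f j x\<bar>"] LINT_abs_nonneg[of ?M u]
        LINT_abs_nonneg[of ?M "f m"]
      by (simp_all add: S_def LINT_abs_nonneg)
    then have "(1+r)^m * (\<Sum>j<m. LINT x|?M. \<bar>f j x\<bar>) \<le> (1+r)^m * S"
      using r by (intro mult_left_mono) auto
    then have "\<forall>x\<in>{0..r}. \<bar>G x\<bar> \<le> (1+r)^m * S"
      using G_bound order.trans by blast
    ultimately show "\<exists>B. B \<in> borel_measurable ?M \<and> (\<forall>x\<in>{0..r}. \<bar>B x\<bar> \<le> C * S) \<and>
        weak_deriv_eq r 0 u (\<lambda>x. f m x + B x)"
      using f \<open>(LINT x|?M. \<bar>f m x\<bar>) + _ \<le> S\<close> by (intro C[OF u _ G]) auto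
  qed
qed

section \<open>\<open>L_p\<close> norms on \<open>[0, r]\<close>\<close>

lemma esssup_abs_nonneg:
  fixes r :: real
  assumes r: "0 < r"
  shows "0 \<le> esssup (lebesgue_on {0..r}) (\<lambda>x. ereal \<bar>F x\<bar>)"
proof -
  have "emeasure (lebesgue_on {0..r}) (space (lebesgue_on {0..r})) \<noteq> 0"
    using r by (simp add: emeasure_restrict_space)
  then have "esssup (lebesgue_on {0..r}) (\<lambda>x. 0) = 0" by (rule esssup_const)
  moreover have "esssup (lebesgue_on {0..r}) (\<lambda>x. 0) \<le> esssup (lebesgue_on {0..r}) (\<lambda>x. ereal \<bar>F x\<bar>)"
    by (rule esssup_mono) auto
  ultimately show ?thesis by metis
qed

lemma Lp_norm_nonneg: "0 < r \<Longrightarrow> 0 \<le> Lp_norm p r F"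
  unfolding Lp_norm_def using esssup_abs_nonneg[of r F] by (auto simp: real_of_ereal_pos)

lemma Lp_norm_one: "Lp_norm 1 r F = (LINT x|lebesgue_on {0..r}. \<bar>F x\<bar>)"
  unfolding Lp_norm_def using LINT_abs_nonneg[of "lebesgue_on {0..r}" F] by simp

lemma memLp_one_integrable: "memLp 1 r F \<Longrightarrow> integrable (lebesgue_on {0..r}) F"
  unfolding memLp_def by (auto simp: integrable_abs_iff)

lemma one_le_enn2real: "1 \<le> p \<Longrightarrow> p \<noteq> \<infinity> \<Longrightarrow> 1 \<le> enn2real p"
  using enn2real_mono[of 1 p] by (simp add: top.not_eq_extremum)

lemma memLp_integrable:
  fixes F :: "real \<Rightarrow> real"
  assumes p: "1 \<le> p" and F: "memLp p r F"
  shows "integrable (lebesgue_on {0..r}) F"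
proof -
  interpret finite_measure "lebesgue_on {0..r}" by (rule finite_measure_lebesgue_on) simp
  have Fm: "F \<in> borel_measurable (lebesgue_on {0..r})" using F unfolding memLp_def by simp
  show ?thesis
  proof (cases "p = \<infinity>")
    case True
    then obtain C where "AE x in lebesgue_on {0..r}. \<bar>F x\<bar> \<le> C" using F unfolding memLp_def by auto
    then show ?thesis using Fm by (intro integrable_const_bound[where B=C]) auto
  next
    case False
    define q where "q = enn2real p"
    have q: "1 \<le> q" unfolding q_def using one_le_enn2real[OF p False] .
    have Fq: "integrable (lebesgue_on {0..r}) (\<lambda>x. \<bar>F x\<bar> powr q)"
      using F False unfolding memLp_def q_def by auto
    have pointwise: "\<bar>F x\<bar> \<le> 1 + \<bar>F x\<bar> powr q" for x
    proof (cases "\<bar>F x\<bar> \<le> 1")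
      case False
      then have "\<bar>F x\<bar> powr 1 \<le> \<bar>F x\<bar> powr q" by (intro powr_mono q) auto
      then show ?thesis by simp
    qed (use powr_ge_zero[of "\<bar>F x\<bar>" q] in linarith)
    show ?thesis
    proof (rule Bochner_Integration.integrable_bound[where f="\<lambda>x. 1 + \<bar>F x\<bar> powr q"])
      show "integrable (lebesgue_on {0..r}) (\<lambda>x. 1 + \<bar>F x\<bar> powr q)"
        by (intro Bochner_Integration.integrable_add Fq continuous_imp_integrable_real continuous_on_const)
      show "AE x in lebesgue_on {0..r}. norm (F x) \<le> norm (1 + \<bar>F x\<bar> powr q)"
        using pointwise by (intro AE_I2) simp
    qed (rule Fm)
  qed
qed

lemma esssup_abs_eq_Lp_norm_infinity:
  fixes F :: "real \<Rightarrow> real"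
  assumes r: "0 < r" and Fm: "F \<in> borel_measurable (lebesgue_on {0..r})"
    and C: "AE x in lebesgue_on {0..r}. \<bar>F x\<bar> \<le> C"
  shows "esssup (lebesgue_on {0..r}) (\<lambda>x. ereal \<bar>F x\<bar>) = ereal (Lp_norm \<infinity> r F)"
    and "AE x in lebesgue_on {0..r}. \<bar>F x\<bar> \<le> Lp_norm \<infinity> r F"
proof -
  let ?E = "esssup (lebesgue_on {0..r}) (\<lambda>x. ereal \<bar>F x\<bar>)"
  have "?E \<le> ereal C"
    by (rule esssup_I) (use Fm C in \<open>auto elim: eventually_mono\<close>)
  then obtain e where "?E = ereal e" using esssup_abs_nonneg[OF r, of F] by (cases ?E) auto
  then show E: "?E = ereal (Lp_norm \<infinity> r F)" by (simp add: Lp_norm_def)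
  show "AE x in lebesgue_on {0..r}. \<bar>F x\<bar> \<le> Lp_norm \<infinity> r F"
    using esssup_AE[of "\<lambda>x. ereal \<bar>F x\<bar>" "lebesgue_on {0..r}"] by (rule eventually_mono) (simp add: E)
qed

text \<open>With \<open>l = \<parallel>F\<parallel>_q\<close>, the pointwise bound \<open>|F| \<le> l + |F|^q / l^(q-1)\<close> is used in place of
  the Hoelder inequality.\<close>

lemma LINT_abs_le_powr_norm:
  fixes F :: "real \<Rightarrow> real"
  assumes r: "0 < r" and q: "1 \<le> q" and F: "integrable (lebesgue_on {0..r}) F"
    and Fq: "integrable (lebesgue_on {0..r}) (\<lambda>x. \<bar>F x\<bar> powr q)"
  shows "(LINT x|lebesgue_on {0..r}. \<bar>F x\<bar>)
       \<le> (1 + r) * (LINT x|lebesgue_on {0..r}. \<bar>F x\<bar> powr q) powr (1/q)"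
proof -
  let ?M = "lebesgue_on {0..r}"
  define X where "X = (LINT x|?M. \<bar>F x\<bar> powr q)"
  define l where "l = X powr (1/q)"
  have X0: "0 \<le> X" unfolding X_def by (rule integral_nonneg_AE) auto
  show ?thesis
  proof (cases "l = 0")
    case True
    then have "X = 0" unfolding l_def by simp
    then have "AE x in ?M. \<bar>F x\<bar> powr q = 0"
      using integral_nonneg_eq_0_iff_AE[OF Fq] unfolding X_def by auto
    then have "(LINT x|?M. \<bar>F x\<bar>) = (LINT x|?M. 0)"
      using F by (intro integral_cong_AE) (auto elim: eventually_mono)
    then show ?thesis using True unfolding l_def X_def by simp
  next
    case False
    then have l0: "0 < l" unfolding l_def by simp
    have "\<bar>F x\<bar> \<le> l + \<bar>F x\<bar> powr q / l powr (q - 1)" for x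
    proof (cases "\<bar>F x\<bar> \<le> l")
      case False
      then have "\<bar>F x\<bar> * l powr (q - 1) \<le> \<bar>F x\<bar> * \<bar>F x\<bar> powr (q - 1)"
        using q l0 by (intro mult_left_mono powr_mono2) auto
      also have "\<dots> = \<bar>F x\<bar> powr q"
        using False l0 by (simp add: powr_mult_base)
      finally have "\<bar>F x\<bar> \<le> \<bar>F x\<bar> powr q / l powr (q - 1)"
        using l0 by (simp add: pos_le_divide_eq)
      then show ?thesis using l0 by linarith
    qed (simp add: add_increasing2)
    then have "(LINT x|?M. \<bar>F x\<bar>) \<le> (LINT x|?M. l + \<bar>F x\<bar> powr q / l powr (q - 1))"
      using F Fq by (intro integral_mono) (auto intro: continuous_imp_integrable_real)
    also have "\<dots> = l * r + X / l powr (q - 1)"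
      using Fq r by (simp add: X_def)
    also have "X / l powr (q - 1) = l"
    proof -
      have "l powr q = X" unfolding l_def using q X0 by (simp add: powr_powr)
      then have "X / l powr (q - 1) = l powr q / l powr (q - 1)" by simp
      also have "\<dots> = l powr (q - (q - 1))" by (simp add: powr_diff)
      finally show ?thesis using l0 by simp
    qed
    finally show ?thesis unfolding l_def X_def by (simp add: algebra_simps)
  qed
qed

lemma LINT_abs_le_Lp_norm:
  fixes F :: "real \<Rightarrow> real"
  assumes r: "0 < r" and p: "1 \<le> p" and F: "memLp p r F"
  shows "(LINT x|lebesgue_on {0..r}. \<bar>F x\<bar>) \<le> (1 + r) * Lp_norm p r F"
proof (cases "p = \<infinity>")
  case True
  then obtain C where Fm: "F \<in> borel_measurable (lebesgue_on {0..r})"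
    and C: "AE x in lebesgue_on {0..r}. \<bar>F x\<bar> \<le> C" using F unfolding memLp_def by auto
  have "(LINT x|lebesgue_on {0..r}. \<bar>F x\<bar>) \<le> (LINT x|lebesgue_on {0..r}. Lp_norm \<infinity> r F)"
    using memLp_integrable[OF p F] esssup_abs_eq_Lp_norm_infinity(2)[OF r Fm C]
    by (intro integral_mono_AE) (auto intro: continuous_imp_integrable_real)
  also have "\<dots> = Lp_norm \<infinity> r F * r" by (rule LINT_const_Icc) (use r in simp)
  also have "\<dots> \<le> (1 + r) * Lp_norm \<infinity> r F"
    using Lp_norm_nonneg[OF r, of \<infinity> F] by (simp add: algebra_simps)
  finally show ?thesis using True by simp
next
  case False
  then show ?thesis
    using LINT_abs_le_powr_norm[OF r one_le_enn2real[OF p False] memLp_integrable[OF p F]] F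
    unfolding memLp_def Lp_norm_def by simp
qed

lemma powr_add_le:
  fixes X Z s :: real
  assumes "0 \<le> X" "0 \<le> Z" "0 \<le> s" "s \<le> 1"
  shows "(X + Z) powr s \<le> 2 * (X powr s + Z powr s)"
proof -
  have "(X + Z) powr s \<le> (2 * max X Z) powr s" using assms by (intro powr_mono2) auto
  also have "\<dots> = 2 powr s * max X Z powr s" using assms by (simp add: powr_mult)
  also have "\<dots> \<le> 2 * max X Z powr s"
    using powr_mono[of s 1 2] assms by (intro mult_right_mono) auto
  also have "max X Z powr s \<le> X powr s + Z powr s" by (simp add: max_def)
  finally show ?thesis by simp
qed

lemma powr_le_1_add: "0 \<le> x \<Longrightarrow> 0 \<le> s \<Longrightarrow> s \<le> 1 \<Longrightarrow> x powr s \<le> 1 + (x::real)"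
  by (cases "x \<le> 1") (use powr_le1[of s x] powr_mono[of s 1 x] in auto)

lemma Lp_norm_add_bounded_infinity:
  fixes F B :: "real \<Rightarrow> real"
  assumes r: "0 < r" and F: "memLp \<infinity> r F"
    and B: "B \<in> borel_measurable (lebesgue_on {0..r})" "\<forall>x\<in>{0..r}. \<bar>B x\<bar> \<le> b"
  shows "memLp \<infinity> r (\<lambda>x. F x + B x) \<and> Lp_norm \<infinity> r (\<lambda>x. F x + B x) \<le> Lp_norm \<infinity> r F + b"
proof -
  obtain C where Fm: "F \<in> borel_measurable (lebesgue_on {0..r})"
    and C: "AE x in lebesgue_on {0..r}. \<bar>F x\<bar> \<le> C" using F unfolding memLp_def by auto
  have FBm: "(\<lambda>x. F x + B x) \<in> borel_measurable (lebesgue_on {0..r})" using Fm B(1) by measurable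
  have "AE x in lebesgue_on {0..r}. \<bar>B x\<bar> \<le> b" using B(2) by (intro AE_I2) auto
  with esssup_abs_eq_Lp_norm_infinity(2)[OF r Fm C]
  have "AE x in lebesgue_on {0..r}. \<bar>F x + B x\<bar> \<le> Lp_norm \<infinity> r F + b"
    by eventually_elim linarith
  moreover from this have "esssup (lebesgue_on {0..r}) (\<lambda>x. ereal \<bar>F x + B x\<bar>) \<le> ereal (Lp_norm \<infinity> r F + b)"
    using FBm by (intro esssup_I) (auto elim: eventually_mono)
  ultimately show ?thesis
    using FBm esssup_abs_eq_Lp_norm_infinity(1)[OF r FBm] unfolding memLp_def by auto
qed

lemma Lp_norm_add_bounded_finite:
  fixes F B :: "real \<Rightarrow> real"
  assumes r: "0 < r" and q: "1 \<le> q" and Fm: "F \<in> borel_measurable (lebesgue_on {0..r})"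
    and Fq: "integrable (lebesgue_on {0..r}) (\<lambda>x. \<bar>F x\<bar> powr q)"
    and B: "B \<in> borel_measurable (lebesgue_on {0..r})" "\<forall>x\<in>{0..r}. \<bar>B x\<bar> \<le> b"
  shows "integrable (lebesgue_on {0..r}) (\<lambda>x. \<bar>F x + B x\<bar> powr q)"
    and "(LINT x|lebesgue_on {0..r}. \<bar>F x + B x\<bar> powr q) powr (1/q)
         \<le> 4 * (LINT x|lebesgue_on {0..r}. \<bar>F x\<bar> powr q) powr (1/q) + 4 * (1 + r) * b"
proof -
  let ?M = "lebesgue_on {0..r}"
  have b0: "0 \<le> b" using B(2) r by force
  define X where "X = (LINT x|?M. \<bar>F x\<bar> powr q)"
  have X0: "0 \<le> X" unfolding X_def by (rule integral_nonneg_AE) auto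
  have pointwise: "\<bar>F x + B x\<bar> powr q \<le> 2 powr q * (\<bar>F x\<bar> powr q + b powr q)" if x: "x \<in> {0..r}" for x
  proof -
    have "\<bar>B x\<bar> \<le> b" using B(2) x by blast
    then have "\<bar>F x + B x\<bar> powr q \<le> (2 * max \<bar>F x\<bar> b) powr q"
      using q by (intro powr_mono2) (auto simp: max_def)
    also have "\<dots> = 2 powr q * max \<bar>F x\<bar> b powr q" using b0 by (simp add: powr_mult)
    also have "max \<bar>F x\<bar> b powr q \<le> \<bar>F x\<bar> powr q + b powr q" by (simp add: max_def)
    finally show ?thesis by simp
  qed
  have G: "integrable ?M (\<lambda>x. 2 powr q * (\<bar>F x\<bar> powr q + b powr q))"
    by (intro integrable_mult_right Bochner_Integration.integrable_add[OF Fq]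
        continuous_imp_integrable_real continuous_on_const)
  show FBq: "integrable ?M (\<lambda>x. \<bar>F x + B x\<bar> powr q)"
  proof (rule Bochner_Integration.integrable_bound[OF G])
    show "(\<lambda>x. \<bar>F x + B x\<bar> powr q) \<in> borel_measurable ?M" using Fm B(1) by measurable
    show "AE x in ?M. norm (\<bar>F x + B x\<bar> powr q) \<le> norm (2 powr q * (\<bar>F x\<bar> powr q + b powr q))"
      using pointwise by (intro AE_I2) simp
  qed
  have "(LINT x|?M. \<bar>F x + B x\<bar> powr q) \<le> (LINT x|?M. 2 powr q * (\<bar>F x\<bar> powr q + b powr q))"
    using pointwise by (intro integral_mono[OF FBq G]) auto
  also have "\<dots> = 2 powr q * (X + r * b powr q)"
    using Fq r by (simp add: X_def mult.commute)
  finally have "(LINT x|?M. \<bar>F x + B x\<bar> powr q) powr (1/q) \<le> (2 powr q * (X + r * b powr q)) powr (1/q)"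
    using q by (intro powr_mono2) (auto intro: integral_nonneg_AE)
  also have "\<dots> = 2 * (X + r * b powr q) powr (1/q)"
    using q X0 r by (simp add: powr_mult powr_powr)
  also have "(X + r * b powr q) powr (1/q) \<le> 2 * (X powr (1/q) + (r * b powr q) powr (1/q))"
    using X0 r q by (intro powr_add_le) auto
  also have "(r * b powr q) powr (1/q) = r powr (1/q) * b"
    using q b0 r by (simp add: powr_mult powr_powr)
  also have "r powr (1/q) * b \<le> (1 + r) * b"
    using powr_le_1_add[of r "1/q"] r q b0 by (intro mult_right_mono) auto
  finally show "(LINT x|?M. \<bar>F x + B x\<bar> powr q) powr (1/q) \<le> 4 * X powr (1/q) + 4 * (1 + r) * b"
    by (simp add: algebra_simps)
qed

lemma Lp_norm_add_bounded:
  fixes F B :: "real \<Rightarrow> real"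
  assumes r: "0 < r" and p: "1 \<le> p" and F: "memLp p r F"
    and B: "B \<in> borel_measurable (lebesgue_on {0..r})" "\<forall>x\<in>{0..r}. \<bar>B x\<bar> \<le> b"
  shows "memLp p r (\<lambda>x. F x + B x) \<and>
         Lp_norm p r (\<lambda>x. F x + B x) \<le> 4 * Lp_norm p r F + 4 * (1 + r) * b"
proof (cases "p = \<infinity>")
  case True
  have "0 \<le> b" "0 \<le> Lp_norm p r F" using B(2) r Lp_norm_nonneg[OF r] by force+
  then have "Lp_norm p r F + b \<le> 4 * Lp_norm p r F + 4 * (1 + r) * b"
    using r by (simp add: algebra_simps)
  then show ?thesis using Lp_norm_add_bounded_infinity[OF r _ B] F True by fastforce
next
  case False
  have Fm: "F \<in> borel_measurable (lebesgue_on {0..r})" using F unfolding memLp_def by simp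
  have FBm: "(\<lambda>x. F x + B x) \<in> borel_measurable (lebesgue_on {0..r})" using Fm B(1) by measurable
  show ?thesis
    using Lp_norm_add_bounded_finite[OF r one_le_enn2real[OF p False] Fm _ B] F False FBm
    unfolding memLp_def Lp_norm_def by simp
qed

lemma Lp_norm_add_bounded_by_L1:
  fixes F B :: "real \<Rightarrow> real"
  assumes r: "0 < r" and p: "1 \<le> p" and F: "memLp p r F" and C: "0 \<le> C" and b: "0 \<le> b"
    and B: "B \<in> borel_measurable (lebesgue_on {0..r})"
      "\<forall>x\<in>{0..r}. \<bar>B x\<bar> \<le> C * ((LINT x|lebesgue_on {0..r}. \<bar>F x\<bar>) + b)"
  shows "memLp p r (\<lambda>x. F x + B x) \<and>
    Lp_norm p r (\<lambda>x. F x + B x) \<le> (4 + 4 * (1 + r)^2 * C) * Lp_norm p r F + (4 + 4 * (1 + r)^2 * C) * b"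
proof -
  define N where "N = 4 + 4 * (1 + r)^2 * C"
  have N: "4 * (1 + r) * C \<le> N"
  proof -
    have "4 * (1 + r) \<le> 4 * (1 + r)^2"
      using r mult_nonneg_nonneg[of r r] by (simp add: power2_eq_square algebra_simps)
    from mult_right_mono[OF this C] show ?thesis unfolding N_def by linarith
  qed
  have "4 * Lp_norm p r F + 4 * (1 + r) * (C * ((LINT x|lebesgue_on {0..r}. \<bar>F x\<bar>) + b))
      \<le> 4 * Lp_norm p r F + 4 * (1 + r) * (C * ((1 + r) * Lp_norm p r F + b))"
    using LINT_abs_le_Lp_norm[OF r p F] C r by (intro add_left_mono mult_left_mono) auto
  also have "\<dots> = N * Lp_norm p r F + (4 * (1 + r) * C) * b"
    by (simp add: N_def power2_eq_square algebra_simps)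
  also have "\<dots> \<le> N * Lp_norm p r F + N * b"
    using N b by (intro add_left_mono mult_right_mono)
  finally show ?thesis
    using Lp_norm_add_bounded[OF r p F B] unfolding N_def by auto
qed

lemma weak_deriv_Lp_bound:
  assumes r: "0 < r"
  shows "\<exists>N>0. \<forall>(p::ennreal) (u::real \<Rightarrow> real) (f::nat \<Rightarrow> real \<Rightarrow> real).
    1 \<le> p \<longrightarrow> memLp p r u \<longrightarrow> (\<forall>j<m. memLp 1 r (f j)) \<longrightarrow> memLp p r (f m) \<longrightarrow>
    weak_deriv_eq_sum r m u f \<longrightarrow>
    (\<exists>g. memLp p r g \<and> weak_deriv_eq r 0 u g \<and>
       Lp_norm p r g \<le> N * Lp_norm 1 r u + N * Lp_norm p r (f m) + N * (\<Sum>j<m. Lp_norm 1 r (f j)))"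
proof -
  let ?M = "lebesgue_on {0..r}"
  from weak_deriv_first_order_bound[OF r, of m]
  obtain C where "0 \<le> C" and C: "\<And>u f. integrable ?M u \<Longrightarrow> \<forall>j\<le>m. integrable ?M (f j) \<Longrightarrow>
    weak_deriv_eq_sum r m u f \<Longrightarrow>
    \<exists>B. B \<in> borel_measurable ?M \<and>
      (\<forall>x\<in>{0..r}. \<bar>B x\<bar> \<le> C * ((LINT x|?M. \<bar>f m x\<bar>)
          + ((LINT x|?M. \<bar>u x\<bar>) + (\<Sum>j<m. LINT x|?M. \<bar>f j x\<bar>)))) \<and>
      weak_deriv_eq r 0 u (\<lambda>x. f m x + B x)"
    by blast
  define N where "N = 4 + 4 * (1 + r)^2 * C"
  show ?thesis
  proof (intro exI[of _ N] conjI allI impI)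
    show "0 < N" using \<open>0 \<le> C\<close> by (simp add: N_def add_pos_nonneg)
    fix p u f
    assume p: "1 \<le> p" and u: "memLp p r u" and f: "\<forall>j<m. memLp 1 r (f j)" and fm: "memLp p r (f m)"
      and hyp: "weak_deriv_eq_sum r m u f"
    have "\<forall>j\<le>m. integrable ?M (f j)"
      using f memLp_one_integrable memLp_integrable[OF p fm] by (metis le_neq_implies_less)
    then obtain B where B: "B \<in> borel_measurable ?M"
      "\<forall>x\<in>{0..r}. \<bar>B x\<bar> \<le> C * ((LINT x|?M. \<bar>f m x\<bar>) + (Lp_norm 1 r u + (\<Sum>j<m. Lp_norm 1 r (f j))))"
      and eq: "weak_deriv_eq r 0 u (\<lambda>x. f m x + B x)"
      using C[OF memLp_integrable[OF p u] _ hyp] by (auto simp: Lp_norm_one)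
    have "0 \<le> Lp_norm 1 r u + (\<Sum>j<m. Lp_norm 1 r (f j))"
      using Lp_norm_nonneg[OF r] by (simp add: sum_nonneg)
    from Lp_norm_add_bounded_by_L1[OF r p fm \<open>0 \<le> C\<close> this B] eq
    show "\<exists>g. memLp p r g \<and> weak_deriv_eq r 0 u g \<and>
       Lp_norm p r g \<le> N * Lp_norm 1 r u + N * Lp_norm p r (f m) + N * (\<Sum>j<m. Lp_norm 1 r (f j))"
      unfolding N_def by (intro exI[of _ "\<lambda>x. f m x + B x"]) (auto simp: algebra_simps)
  qed
qed

theorem lemma4p3:
  fixes r :: real and k :: nat
  assumes "0 < r" and "1 \<le> k"
  shows "\<exists>N>0. \<forall>(p::ennreal) (u::real \<Rightarrow> real) (f::nat \<Rightarrow> real \<Rightarrow> real).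
    1 \<le> p \<longrightarrow> memLp p r u \<longrightarrow>
    (\<forall>j < k - 1. memLp 1 r (f j)) \<longrightarrow> memLp p r (f (k - 1)) \<longrightarrow>
    (\<forall>\<phi>. test_fun r \<phi> \<longrightarrow>
        (-1) ^ k * (LINT x|lebesgue_on {0..r}. u x * (deriv ^^ k) \<phi> x) =
        (\<Sum>j<k. (-1) ^ j * (LINT x|lebesgue_on {0..r}. f j x * (deriv ^^ j) \<phi> x))) \<longrightarrow>
    (\<exists>g. memLp p r g \<and>
       (\<forall>\<phi>. test_fun r \<phi> \<longrightarrow>
          - (LINT x|lebesgue_on {0..r}. u x * deriv \<phi> x) = (LINT x|lebesgue_on {0..r}. g x * \<phi> x)) \<and>
       Lp_norm p r g \<le> N * Lp_norm 1 r u + N * Lp_norm p r (f (k - 1))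
                        + N * (\<Sum>j<k - 1. Lp_norm 1 r (f j)))"
proof -
  obtain m where k: "k = Suc m" using \<open>1 \<le> k\<close> by (cases k) auto
  show ?thesis
    using weak_deriv_Lp_bound[OF \<open>0 < r\<close>, of m]
    unfolding k diff_Suc_1 weak_deriv_eq_sum_def weak_deriv_eq_0_iff .
qed

end
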